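(* Let $V$ be a real vector space of finite even dimension with nondegenerate quadratic form $Q$, and let $\sigma$ be an admissible real structure on $\mathbb{C}l(V)$. Let $V_+=V\cap V_\sigma$ and $V_-=V\cap iV_\sigma$. The following are equivalent: (1) $Q$ is positive definite on $V_+$ and negative definite on $V_-$; (2) the quadratic form $Q_\sigma$ on $V$ is positive definite; (3) the restriction of $Q$ to $V_\sigma$ is positive definite; (4) the $\sigma$-product $(\cdot,\cdot)_\sigma$ is positive definite.
   Context: $Cl(V,Q)$ is the real Clifford algebra with $v^2=+Q(v)$, $\mathbb{C}l(V)$ its complexification with complex conjugation $c$, $V^{\mathbb{C}}\subset\mathbb{C}l(V)$, $B$ the bilinear form of $Q$ extended complex-bilinearly. A real structure is an involutive antilinear algebra automorphism of $\mathbb{C}l(V)$ stabilizing $V^{\mathbb{C}}$; it is admissible if it commutes with $c$ (then $V=V_+\oplus V_-$ is a $Q$-orthogonal decomposition). $V_\sigma=\{v\in V^{\mathbb{C}}:\sigma(v)=v\}$; $Q_\sigma(v)=B(\sigma(v),v)$ for $v\in V$. $T$ is the linear antiautomorphism of $\mathbb{C}l(V)$ restricting to the identity on $V$; $\tau_n$ is the normalized trace (the unique linear form with $\tau_n(ab)=\tau_n(ba)$, $\tau_n(1)=1$); the $\sigma$-product is $(a,b)_\sigma=\tau_n(\sigma(T(a))b)$. *)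

theory Defs
  imports "HOL-Analysis.Analysis"
begin

definition quadratic_form :: "('v::real_vector \<Rightarrow> real) \<Rightarrow> bool" where
  "quadratic_form Q \<longleftrightarrow>
     (\<exists>b. bilinear b \<and> (\<forall>u v. b u v = b v u) \<and> (\<forall>v. Q v = b v v))"

definition polar :: "('v::real_vector \<Rightarrow> real) \<Rightarrow> 'v \<Rightarrow> 'v \<Rightarrow> real" where
  "polar Q u v = (Q (u + v) - Q u - Q v) / 2"

definition nondegenerate :: "('v::real_vector \<Rightarrow> real) \<Rightarrow> bool" where
  "nondegenerate Q \<longleftrightarrow> (\<forall>u. (\<forall>v. polar Q u v = 0) \<longrightarrow> u = 0)"

definition finite_dim_space :: "'v::real_vector itself \<Rightarrow> bool" where
  "finite_dim_space _ \<longleftrightarrow> (\<exists>S::'v set. finite S \<and> span S = UNIV)"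

definition complex_algebra :: "(complex \<Rightarrow> 'a::ring_1 \<Rightarrow> 'a) \<Rightarrow> bool" where
  "complex_algebra sm \<longleftrightarrow> module sm \<and>
     (\<forall>c x y. sm c (x * y) = sm c x * y \<and> sm c (x * y) = x * sm c y)"

definition complex_dim :: "(complex \<Rightarrow> 'a::ring_1 \<Rightarrow> 'a) \<Rightarrow> nat" where
  "complex_dim sm = vector_space.dim sm (UNIV :: 'a set)"

definition generates :: "(complex \<Rightarrow> 'a::ring_1 \<Rightarrow> 'a) \<Rightarrow> 'a set \<Rightarrow> bool" where
  "generates sm G \<longleftrightarrow>
     (\<forall>S. 1 \<in> S \<and> G \<subseteq> S \<and> (\<forall>x\<in>S. \<forall>y\<in>S. x + y \<in> S \<and> x * y \<in> S)
          \<and> (\<forall>c. \<forall>x\<in>S. sm c x \<in> S) \<longrightarrow> S = UNIV)"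

text \<open>\<open>(sm, \<iota>)\<close> presents \<open>\<complex>l(V) = Cl(V,Q) \<otimes> \<complex>\<close>: a complex algebra generated by a
  real-linear image of V with \<open>\<iota>(v)\<^sup>2 = +Q(v)\<close>, of complex dimension \<open>2^dim V\<close>
  (hence isomorphic to the universal one).\<close>
definition complex_clifford ::
  "('v::real_vector \<Rightarrow> real) \<Rightarrow> (complex \<Rightarrow> 'a::ring_1 \<Rightarrow> 'a) \<Rightarrow> ('v \<Rightarrow> 'a) \<Rightarrow> bool" where
  "complex_clifford Q sm \<iota> \<longleftrightarrow>
     complex_algebra sm \<and>
     (\<forall>u v. \<iota> (u + v) = \<iota> u + \<iota> v) \<and>
     (\<forall>r v. \<iota> (r *\<^sub>R v) = sm (complex_of_real r) (\<iota> v)) \<and>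
     (\<forall>v. \<iota> v * \<iota> v = sm (complex_of_real (Q v)) 1) \<and>
     generates sm (range \<iota>) \<and>
     complex_dim sm = 2 ^ dim (UNIV :: 'v set)"

definition VC :: "(complex \<Rightarrow> 'a::ring_1 \<Rightarrow> 'a) \<Rightarrow> ('v \<Rightarrow> 'a) \<Rightarrow> 'a set" where
  "VC sm \<iota> = {\<iota> u + sm \<i> (\<iota> w) | u w. True}"

text \<open>Complex-bilinear extension of B to \<open>V^\<complex>\<close>.\<close>
definition Bc :: "('v::real_vector \<Rightarrow> real) \<Rightarrow> (complex \<Rightarrow> 'a::ring_1 \<Rightarrow> 'a) \<Rightarrow> ('v \<Rightarrow> 'a)
    \<Rightarrow> 'a \<Rightarrow> 'a \<Rightarrow> complex" where
  "Bc Q sm \<iota> x y = (THE z. \<exists>u1 w1 u2 w2.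
       x = \<iota> u1 + sm \<i> (\<iota> w1) \<and> y = \<iota> u2 + sm \<i> (\<iota> w2) \<and>
       z = Complex (polar Q u1 u2 - polar Q w1 w2) (polar Q u1 w2 + polar Q w1 u2))"

definition antilinear_automorphism :: "(complex \<Rightarrow> 'a::ring_1 \<Rightarrow> 'a) \<Rightarrow> ('a \<Rightarrow> 'a) \<Rightarrow> bool" where
  "antilinear_automorphism sm f \<longleftrightarrow> bij f \<and>
     (\<forall>x y. f (x + y) = f x + f y) \<and> (\<forall>c x. f (sm c x) = sm (cnj c) (f x)) \<and>
     (\<forall>x y. f (x * y) = f x * f y) \<and> f 1 = 1"

definition cconj :: "(complex \<Rightarrow> 'a::ring_1 \<Rightarrow> 'a) \<Rightarrow> ('v \<Rightarrow> 'a) \<Rightarrow> 'a \<Rightarrow> 'a" where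
  "cconj sm \<iota> = (THE c. antilinear_automorphism sm c \<and> (\<forall>v. c (\<iota> v) = \<iota> v))"

definition real_structure :: "(complex \<Rightarrow> 'a::ring_1 \<Rightarrow> 'a) \<Rightarrow> ('v \<Rightarrow> 'a) \<Rightarrow> ('a \<Rightarrow> 'a) \<Rightarrow> bool" where
  "real_structure sm \<iota> \<sigma> \<longleftrightarrow> antilinear_automorphism sm \<sigma> \<and> (\<forall>x. \<sigma> (\<sigma> x) = x) \<and>
     \<sigma> ` VC sm \<iota> \<subseteq> VC sm \<iota>"

definition admissible :: "(complex \<Rightarrow> 'a::ring_1 \<Rightarrow> 'a) \<Rightarrow> ('v \<Rightarrow> 'a) \<Rightarrow> ('a \<Rightarrow> 'a) \<Rightarrow> bool" where
  "admissible sm \<iota> \<sigma> \<longleftrightarrow> real_structure sm \<iota> \<sigma> \<and> \<sigma> \<circ> cconj sm \<iota> = cconj sm \<iota> \<circ> \<sigma>"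

definition Vsigma :: "(complex \<Rightarrow> 'a::ring_1 \<Rightarrow> 'a) \<Rightarrow> ('v \<Rightarrow> 'a) \<Rightarrow> ('a \<Rightarrow> 'a) \<Rightarrow> 'a set" where
  "Vsigma sm \<iota> \<sigma> = {x \<in> VC sm \<iota>. \<sigma> x = x}"

definition Qsigma :: "('v::real_vector \<Rightarrow> real) \<Rightarrow> (complex \<Rightarrow> 'a::ring_1 \<Rightarrow> 'a) \<Rightarrow> ('v \<Rightarrow> 'a)
    \<Rightarrow> ('a \<Rightarrow> 'a) \<Rightarrow> 'v \<Rightarrow> complex" where
  "Qsigma Q sm \<iota> \<sigma> v = Bc Q sm \<iota> (\<sigma> (\<iota> v)) (\<iota> v)"

definition transp :: "(complex \<Rightarrow> 'a::ring_1 \<Rightarrow> 'a) \<Rightarrow> ('v \<Rightarrow> 'a) \<Rightarrow> 'a \<Rightarrow> 'a" where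
  "transp sm \<iota> = (THE T. (\<forall>x y. T (x + y) = T x + T y) \<and> (\<forall>c x. T (sm c x) = sm c (T x)) \<and>
       (\<forall>x y. T (x * y) = T y * T x) \<and> T 1 = 1 \<and> (\<forall>v. T (\<iota> v) = \<iota> v))"

definition ntrace :: "(complex \<Rightarrow> 'a::ring_1 \<Rightarrow> 'a) \<Rightarrow> 'a \<Rightarrow> complex" where
  "ntrace sm = (THE \<tau>. (\<forall>x y. \<tau> (x + y) = \<tau> x + \<tau> y) \<and> (\<forall>c x. \<tau> (sm c x) = c * \<tau> x) \<and>
       (\<forall>a b. \<tau> (a * b) = \<tau> (b * a)) \<and> \<tau> 1 = 1)"

definition sigma_product :: "(complex \<Rightarrow> 'a::ring_1 \<Rightarrow> 'a) \<Rightarrow> ('v \<Rightarrow> 'a) \<Rightarrow> ('a \<Rightarrow> 'a)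
    \<Rightarrow> 'a \<Rightarrow> 'a \<Rightarrow> complex" where
  "sigma_product sm \<iota> \<sigma> a b = ntrace sm (\<sigma> (transp sm \<iota> a) * b)"

definition cpos :: "complex \<Rightarrow> bool" where
  "cpos z \<longleftrightarrow> z \<in> \<real> \<and> Re z > 0"

end

(* Let S be the restriction of sigma to V, an isometric involution with eigenspaces V_+ and V_-.
   Then V_sigma = V_+ + i V_-, Q_sigma(v) = Q(v_+) - Q(v_-), and B(x, x) = Q(u) - Q(w) for
   x = u + i w with u in V_+, w in V_-; this gives (1) <-> (2) <-> (3).  For (4), take a
   B-orthogonal basis e_1, ..., e_n of V adapted to V_+ and V_-, so that sigma(e_i) = s_i e_i with
   s_i = +1 or -1.  The monomials e_I are orthogonal for the sigma-product, with
   (e_I, e_I)_sigma = prod_{i in I} s_i Q(e_i), which is positive under (1); conversely the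
   sigma-product restricts to B on V_sigma. *)
theory Submission
  imports Defs
begin

section \<open>Clifford monomials\<close>

lemma sum_additive:
  fixes F :: "'a::comm_monoid_add \<Rightarrow> 'b::cancel_comm_monoid_add"
  assumes "\<And>x y. F (x + y) = F x + F y"
  shows "F (sum f A) = (\<Sum>a\<in>A. F (f a))"
  using sum_comp_morphism[of F f A] assms[of 0 0] assms by (simp add: comp_def)

definition gen_factor :: "(nat \<Rightarrow> 'a::ring_1) \<Rightarrow> nat set \<Rightarrow> nat \<Rightarrow> 'a" where
  "gen_factor g I i = (if i \<in> I then g i else 1)"

definition monomial :: "(nat \<Rightarrow> 'a::ring_1) \<Rightarrow> nat \<Rightarrow> nat set \<Rightarrow> 'a" where
  "monomial g n I = prod_list (map (gen_factor g I) [0..<n])"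

definition rev_monomial :: "(nat \<Rightarrow> 'a::ring_1) \<Rightarrow> nat \<Rightarrow> nat set \<Rightarrow> 'a" where
  "rev_monomial g n I = prod_list (rev (map (gen_factor g I) [0..<n]))"

lemma prod_list_gen_factor:
  "prod_list (map (gen_factor g J) L) = prod_list (map g (filter (\<lambda>i. i \<in> J) L))"
  by (induction L) (auto simp: gen_factor_def)

lemma prod_list_rev_gen_factor:
  "prod_list (rev (map (gen_factor g J) L)) = prod_list (map g (rev (filter (\<lambda>i. i \<in> J) L)))"
  by (induction L) (auto simp: gen_factor_def)

lemma gen_factor_sym_diff_other: "i \<noteq> j \<Longrightarrow> gen_factor g (sym_diff I {j}) i = gen_factor g I i"
  by (auto simp: gen_factor_def)

lemma upt_split_at: "j < n \<Longrightarrow> [0..<n] = [0..<j] @ j # [Suc j..<n]"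
  by (metis le0 upt_add_eq_append upt_conv_Cons add_diff_inverse_nat less_imp_le_nat not_less)

text \<open>Intended instance: \<open>g i = \<iota> (e i)\<close> and \<open>q i = B (e i) (e i)\<close> for a \<open>B\<close>-orthogonal
  basis \<open>e\<close> of \<open>V\<close>.\<close>
locale clifford_frame =
  fixes \<kappa> :: "complex \<Rightarrow> 'a::ring_1" and n :: nat and g :: "nat \<Rightarrow> 'a" and q :: "nat \<Rightarrow> real"
  assumes scalar_add: "\<kappa> (x + y) = \<kappa> x + \<kappa> y"
    and scalar_mult: "\<kappa> (x * y) = \<kappa> x * \<kappa> y"
    and scalar_one: "\<kappa> 1 = 1"
    and scalar_central: "\<kappa> c * z = z * \<kappa> c"
    and gen_square: "i < n \<Longrightarrow> g i * g i = \<kappa> (complex_of_real (q i))"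
    and gen_anticommute: "i < n \<Longrightarrow> j < n \<Longrightarrow> i \<noteq> j \<Longrightarrow> g i * g j = - (g j * g i)"
begin

lemma scalar_zero [simp]: "\<kappa> 0 = 0"
  using scalar_add[of 0 0] by simp

lemma scalar_uminus: "\<kappa> (- x) = - \<kappa> x"
  using scalar_add[of x "- x"] by (metis add.right_inverse add.inverse_unique scalar_zero)

lemma scalar_diff: "\<kappa> (x - y) = \<kappa> x - \<kappa> y"
  using scalar_add[of x "- y"] scalar_uminus[of y] by simp

lemma scalar_minus_one_power: "\<kappa> ((- 1) ^ k) = (- 1) ^ k"
  by (induction k) (simp_all add: scalar_mult scalar_uminus scalar_one)

lemma scalar_inj: "\<kappa> c = \<kappa> d \<longleftrightarrow> c = d"
proof
  assume "\<kappa> c = \<kappa> d"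
  then have "\<kappa> (c - d) * \<kappa> (inverse (c - d)) = 0" by (simp add: scalar_diff)
  then have "\<kappa> ((c - d) * inverse (c - d)) = 0" by (simp only: scalar_mult)
  then show "c = d" using scalar_one by (cases "c = d") auto
qed simp

lemma scalar_commute_left: "x * (\<kappa> c * y) = \<kappa> c * (x * y)"
  by (metis scalar_central mult.assoc)

lemma prod_list_gen_factor_mult_gen:
  assumes "j < n" "set L \<subseteq> {..<n}"
  shows "prod_list (map (gen_factor g I) L) * g j
     = (- 1) ^ length (filter (\<lambda>i. i \<in> I \<and> i \<noteq> j) L) * (g j * prod_list (map (gen_factor g I) L))"
  using assms(2)
proof (induction L)
  case (Cons a L)
  let ?s = "(- 1::'a) ^ length (filter (\<lambda>i. i \<in> I \<and> i \<noteq> j) L)"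
  have "a < n" using Cons.prems by auto
  then have a: "gen_factor g I a * g j = (if a \<in> I \<and> a \<noteq> j then - 1 else 1) * (g j * gen_factor g I a)"
    using gen_anticommute[of a j] assms(1) by (auto simp: gen_factor_def)
  have "prod_list (map (gen_factor g I) (a # L)) * g j
      = gen_factor g I a * (?s * (g j * prod_list (map (gen_factor g I) L)))"
    using Cons by (simp add: mult.assoc)
  also have "\<dots> = ?s * ((gen_factor g I a * g j) * prod_list (map (gen_factor g I) L))"
    by (simp add: minus_one_power_iff mult.assoc)
  finally show ?case
    unfolding a by (simp add: minus_one_power_iff mult.assoc)
qed simp

definition gen_mult_coeff :: "nat set \<Rightarrow> nat \<Rightarrow> complex" where
  "gen_mult_coeff I j = (- 1) ^ (length (filter (\<lambda>i. i \<in> I) [Suc j..<n])) *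
     (if j \<in> I then complex_of_real (q j) else 1)"

lemma cnj_gen_mult_coeff [simp]: "cnj (gen_mult_coeff I j) = gen_mult_coeff I j"
  by (simp add: gen_mult_coeff_def)

lemma monomial_split_at:
  "j < n \<Longrightarrow> monomial g n J = prod_list (map (gen_factor g J) [0..<j]) * gen_factor g J j
     * prod_list (map (gen_factor g J) [Suc j..<n])"
  unfolding monomial_def by (simp add: upt_split_at mult.assoc)

lemma rev_monomial_split_at:
  "j < n \<Longrightarrow> rev_monomial g n J = prod_list (map (gen_factor g J) (rev [Suc j..<n]))
     * gen_factor g J j * prod_list (map (gen_factor g J) (rev [0..<j]))"
  unfolding rev_monomial_def by (simp add: upt_split_at rev_map mult.assoc)

text \<open>Multiplying by a generator toggles its index; the sign comes from moving \<open>g j\<close>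
  past the later factors.\<close>
lemma monomial_mult_gen:
  assumes j: "j < n"
  shows "monomial g n I * g j = \<kappa> (gen_mult_coeff I j) * monomial g n (sym_diff I {j})"
proof -
  let ?f = "gen_factor g I" and ?f' = "gen_factor g (sym_diff I {j})"
  let ?A = "prod_list (map ?f [0..<j])" and ?C = "prod_list (map ?f [Suc j..<n])"
  let ?k = "length (filter (\<lambda>i. i \<in> I) [Suc j..<n])"
  have A: "prod_list (map ?f' [0..<j]) = ?A" and C: "prod_list (map ?f' [Suc j..<n]) = ?C"
    by (auto intro!: arg_cong[where f=prod_list] map_cong simp: gen_factor_sym_diff_other)
  have "filter (\<lambda>i. i \<in> I \<and> i \<noteq> j) [Suc j..<n] = filter (\<lambda>i. i \<in> I) [Suc j..<n]"
    by (rule filter_cong) auto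
  moreover have "set [Suc j..<n] \<subseteq> {..<n}" by auto
  ultimately have Cg: "?C * g j = (- 1) ^ ?k * (g j * ?C)"
    using prod_list_gen_factor_mult_gen[OF j, of "[Suc j..<n]" I] by simp
  have "monomial g n I * g j = ?A * ?f j * (?C * g j)"
    unfolding monomial_split_at[OF j] by (simp add: mult.assoc)
  also have "\<dots> = (- 1) ^ ?k * (?A * (?f j * g j) * ?C)"
    unfolding Cg by (simp add: minus_one_power_iff mult.assoc)
  also have "\<dots> = \<kappa> (gen_mult_coeff I j) * monomial g n (sym_diff I {j})"
  proof (cases "j \<in> I")
    case True
    then have "?f j * g j = \<kappa> (complex_of_real (q j))" "?f' j = 1"
      using gen_square[OF j] by (simp_all add: gen_factor_def)
    then show ?thesis using True A C monomial_split_at[OF j, of "sym_diff I {j}"]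
      by (simp add: gen_mult_coeff_def scalar_mult scalar_minus_one_power scalar_commute_left mult.assoc)
  next
    case False
    then have "?f j * g j = g j" "?f' j = g j" by (simp_all add: gen_factor_def)
    then show ?thesis using False A C monomial_split_at[OF j, of "sym_diff I {j}"]
      by (simp add: gen_mult_coeff_def scalar_minus_one_power scalar_one mult.assoc)
  qed
  finally show ?thesis .
qed

lemma gen_mult_rev_monomial:
  assumes j: "j < n"
  shows "g j * rev_monomial g n I = \<kappa> (gen_mult_coeff I j) * rev_monomial g n (sym_diff I {j})"
proof -
  let ?f = "gen_factor g I" and ?f' = "gen_factor g (sym_diff I {j})"
  let ?A = "prod_list (map ?f (rev [0..<j]))" and ?C = "prod_list (map ?f (rev [Suc j..<n]))"
  let ?k = "length (filter (\<lambda>i. i \<in> I) [Suc j..<n])"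
  have A: "prod_list (map ?f' (rev [0..<j])) = ?A" and C: "prod_list (map ?f' (rev [Suc j..<n])) = ?C"
    by (auto intro!: arg_cong[where f=prod_list] map_cong simp: gen_factor_sym_diff_other)
  have "filter (\<lambda>i. i \<in> I \<and> i \<noteq> j) [Suc j..<n] = filter (\<lambda>i. i \<in> I) [Suc j..<n]"
    by (rule filter_cong) auto
  then have "length (filter (\<lambda>i. i \<in> I \<and> i \<noteq> j) (rev [Suc j..<n])) = ?k"
    by (metis length_rev rev_filter)
  moreover have "set (rev [Suc j..<n]) \<subseteq> {..<n}" by auto
  ultimately have "?C * g j = (- 1) ^ ?k * (g j * ?C)"
    using prod_list_gen_factor_mult_gen[OF j, of "rev [Suc j..<n]" I] by simp
  then have gC: "g j * ?C = (- 1) ^ ?k * (?C * g j)"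
    by (simp add: minus_one_power_iff)
  have gf: "g j * (?f j * X) = ?f j * (g j * X)" for X
    by (simp add: gen_factor_def)
  have "g j * rev_monomial g n I = (g j * ?C) * ?f j * ?A"
    unfolding rev_monomial_split_at[OF j] by (simp add: mult.assoc)
  also have "\<dots> = (- 1) ^ ?k * (?C * (?f j * g j) * ?A)"
    unfolding gC by (simp add: minus_one_power_iff mult.assoc gf)
  also have "\<dots> = \<kappa> (gen_mult_coeff I j) * rev_monomial g n (sym_diff I {j})"
  proof (cases "j \<in> I")
    case True
    then have "?f j * g j = \<kappa> (complex_of_real (q j))" "?f' j = 1"
      using gen_square[OF j] by (simp_all add: gen_factor_def)
    then show ?thesis using True A C rev_monomial_split_at[OF j, of "sym_diff I {j}"]
      by (simp add: gen_mult_coeff_def scalar_mult scalar_minus_one_power scalar_commute_left mult.assoc)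
  next
    case False
    then have "?f j * g j = g j" "?f' j = g j" by (simp_all add: gen_factor_def)
    then show ?thesis using False A C rev_monomial_split_at[OF j, of "sym_diff I {j}"]
      by (simp add: gen_mult_coeff_def scalar_minus_one_power scalar_one mult.assoc)
  qed
  finally show ?thesis .
qed

lemma monomial_empty [simp]: "monomial g n {} = 1"
  by (simp add: monomial_def prod_list_gen_factor)

lemma rev_monomial_empty [simp]: "rev_monomial g n {} = 1"
  by (simp add: rev_monomial_def prod_list_rev_gen_factor)

lemma monomial_singleton: "j < n \<Longrightarrow> monomial g n {j} = g j"
  using monomial_mult_gen[of j "{}"] by (simp add: gen_mult_coeff_def scalar_one)

lemma rev_monomial_singleton: "j < n \<Longrightarrow> rev_monomial g n {j} = g j"
  using gen_mult_rev_monomial[of j "{}"] by (simp add: gen_mult_coeff_def scalar_one)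

lemma monomial_mult_word:
  assumes "distinct L" "set L \<subseteq> {..<n}"
  shows "\<exists>c. monomial g n I * prod_list (map g L) = \<kappa> c * monomial g n (sym_diff I (set L))"
  using assms
proof (induction L rule: rev_induct)
  case Nil
  show ?case by (auto intro!: exI[of _ 1] simp: scalar_one)
next
  case (snoc j L)
  then obtain c where c: "monomial g n I * prod_list (map g L) = \<kappa> c * monomial g n (sym_diff I (set L))"
    by auto
  have j: "j < n" "j \<notin> set L" using snoc.prems by auto
  have "monomial g n I * prod_list (map g (L @ [j])) = \<kappa> c * (monomial g n (sym_diff I (set L)) * g j)"
    by (simp add: c mult.assoc[symmetric])
  also have "\<dots> = \<kappa> (c * gen_mult_coeff (sym_diff I (set L)) j) * monomial g n (sym_diff (sym_diff I (set L)) {j})"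
    unfolding monomial_mult_gen[OF j(1)] by (simp add: scalar_mult mult.assoc)
  also have "sym_diff (sym_diff I (set L)) {j} = sym_diff I (set (L @ [j]))"
    using j(2) by auto
  finally show ?case by blast
qed

lemma monomial_mult:
  assumes "J \<subseteq> {..<n}"
  shows "\<exists>c. monomial g n I * monomial g n J = \<kappa> c * monomial g n (sym_diff I J)"
proof -
  have "distinct (filter (\<lambda>i. i \<in> J) [0..<n])" "set (filter (\<lambda>i. i \<in> J) [0..<n]) = J"
    using assms by auto
  with monomial_mult_word[of "filter (\<lambda>i. i \<in> J) [0..<n]" I] show ?thesis
    unfolding monomial_def[of g n J] prod_list_gen_factor by auto
qed

lemma rev_monomial_mult:
  assumes "I \<subseteq> {..<n}" "J \<subseteq> {..<n}"
  shows "\<exists>c. rev_monomial g n I * monomial g n J = \<kappa> c * monomial g n (sym_diff I J)"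
proof -
  have "set (rev (filter (\<lambda>i. i \<in> I) [0..<n])) = I" using assms(1) by auto
  then obtain c where c: "rev_monomial g n I = \<kappa> c * monomial g n I"
    using monomial_mult_word[of "rev (filter (\<lambda>i. i \<in> I) [0..<n])" "{}"] assms(1)
    unfolding rev_monomial_def prod_list_rev_gen_factor by auto
  obtain c' where c': "monomial g n I * monomial g n J = \<kappa> c' * monomial g n (sym_diff I J)"
    using monomial_mult[OF assms(2)] by blast
  have "rev_monomial g n I * monomial g n J = \<kappa> (c * c') * monomial g n (sym_diff I J)"
    unfolding c mult.assoc c' by (simp add: scalar_mult mult.assoc)
  then show ?thesis by blast
qed

lemma monomial_mult_gen_commute:
  assumes "j < n" "K \<subseteq> {..<n}"
  shows "monomial g n K * g j = (- 1) ^ card (K - {j}) * (g j * monomial g n K)"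
proof -
  have "length (filter (\<lambda>i. i \<in> K \<and> i \<noteq> j) [0..<n]) = card ({i. i \<in> K \<and> i \<noteq> j} \<inter> set [0..<n])"
    by (rule distinct_length_filter) simp
  also have "{i. i \<in> K \<and> i \<noteq> j} \<inter> set [0..<n] = K - {j}" using assms(2) by auto
  moreover have "set [0..<n] \<subseteq> {..<n}" by auto
  ultimately show ?thesis
    using prod_list_gen_factor_mult_gen[OF assms(1), of "[0..<n]" K] unfolding monomial_def by simp
qed

lemma monomial_induct:
  assumes "P 1" and "\<And>i. i < n \<Longrightarrow> P (g i)" and "\<And>u v. P u \<Longrightarrow> P v \<Longrightarrow> P (u * v)"
  shows "P (monomial g n I)"
proof -
  have "set L \<subseteq> {..<n} \<Longrightarrow> P (prod_list (map (gen_factor g I) L))" for L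
    by (induction L) (auto simp: gen_factor_def intro: assms)
  moreover have "set [0..<n] \<subseteq> {..<n}" by auto
  ultimately show ?thesis unfolding monomial_def by blast
qed

end

section \<open>Coordinates, scalar part, reversion and conjugation\<close>

locale clifford_basis = clifford_frame +
  assumes monomials_span: "\<exists>c. x = (\<Sum>I\<in>Pow {..<n}. \<kappa> (c I) * monomial g n I)"
    and monomials_independent:
      "(\<Sum>I\<in>Pow {..<n}. \<kappa> (c I) * monomial g n I) = 0 \<Longrightarrow> I \<subseteq> {..<n} \<Longrightarrow> c I = 0"
    and gen_square_nonzero: "i < n \<Longrightarrow> q i \<noteq> 0"
    and even_rank: "even n"
begin

abbreviation "mon I \<equiv> monomial g n I"
abbreviation "rmon I \<equiv> rev_monomial g n I"

definition coord :: "'a \<Rightarrow> nat set \<Rightarrow> complex" where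
  "coord x = (SOME c. x = (\<Sum>I\<in>Pow {..<n}. \<kappa> (c I) * mon I))"

lemma coord_expansion: "x = (\<Sum>I\<in>Pow {..<n}. \<kappa> (coord x I) * mon I)"
  unfolding coord_def by (rule someI_ex[OF monomials_span])

lemma coord_unique:
  assumes "x = (\<Sum>I\<in>Pow {..<n}. \<kappa> (c I) * mon I)" "I \<subseteq> {..<n}"
  shows "coord x I = c I"
proof -
  have "(\<Sum>I\<in>Pow {..<n}. \<kappa> (coord x I - c I) * mon I)
      = (\<Sum>I\<in>Pow {..<n}. \<kappa> (coord x I) * mon I) - (\<Sum>I\<in>Pow {..<n}. \<kappa> (c I) * mon I)"
    by (simp add: scalar_diff left_diff_distrib sum_subtractf)
  also have "\<dots> = 0"
    using coord_expansion[of x] assms(1) by simp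
  finally show ?thesis using monomials_independent[of "\<lambda>I. coord x I - c I"] assms(2) by simp
qed

lemma coord_add: "I \<subseteq> {..<n} \<Longrightarrow> coord (x + y) I = coord x I + coord y I"
proof (rule coord_unique)
  show "x + y = (\<Sum>I\<in>Pow {..<n}. \<kappa> (coord x I + coord y I) * mon I)"
    by (subst coord_expansion[of x], subst coord_expansion[of y])
       (simp add: sum.distrib scalar_add distrib_right)
qed

lemma coord_scalar: "I \<subseteq> {..<n} \<Longrightarrow> coord (\<kappa> c * x) I = c * coord x I"
proof (rule coord_unique)
  show "\<kappa> c * x = (\<Sum>I\<in>Pow {..<n}. \<kappa> (c * coord x I) * mon I)"
    by (subst coord_expansion[of x]) (simp add: sum_distrib_left scalar_mult mult.assoc)
qed

lemma coord_monomial: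
  assumes "J \<subseteq> {..<n}" "I \<subseteq> {..<n}"
  shows "coord (mon J) I = (if I = J then 1 else 0)"
proof (rule coord_unique[OF _ assms(2)])
  have "(\<Sum>I\<in>Pow {..<n}. \<kappa> (if I = J then 1 else 0) * mon I) = (\<Sum>I\<in>Pow {..<n}. if I = J then mon I else 0)"
    by (rule sum.cong) (simp_all add: scalar_one)
  then show "mon J = (\<Sum>I\<in>Pow {..<n}. \<kappa> (if I = J then 1 else 0) * mon I)"
    using assms(1) by simp
qed

lemma coord_nonzero: "x \<noteq> 0 \<Longrightarrow> \<exists>I\<subseteq>{..<n}. coord x I \<noteq> 0"
proof (rule ccontr)
  assume "x \<noteq> 0" "\<not> (\<exists>I\<subseteq>{..<n}. coord x I \<noteq> 0)"
  then have "(\<Sum>I\<in>Pow {..<n}. \<kappa> (coord x I) * mon I) = 0" by simp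
  with coord_expansion[of x] \<open>x \<noteq> 0\<close> show False by simp
qed

lemma semilinear_expansion:
  fixes F :: "'a \<Rightarrow> 'b::{comm_monoid_add,cancel_comm_monoid_add,times}"
  assumes "\<And>x y. F (x + y) = F x + F y" and "\<And>c x. F (\<kappa> c * x) = h c * F x"
  shows "F x = (\<Sum>I\<in>Pow {..<n}. h (coord x I) * F (mon I))"
proof -
  have "F x = F (\<Sum>I\<in>Pow {..<n}. \<kappa> (coord x I) * mon I)"
    by (subst coord_expansion[of x]) (rule refl)
  also have "\<dots> = (\<Sum>I\<in>Pow {..<n}. h (coord x I) * F (mon I))"
    by (simp add: sum_additive[of F, OF assms(1)] assms(2))
  finally show ?thesis .
qed

definition scalar_part :: "'a \<Rightarrow> complex" where
  "scalar_part x = coord x {}"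

lemma scalar_part_add: "scalar_part (x + y) = scalar_part x + scalar_part y"
  unfolding scalar_part_def by (rule coord_add) simp

lemma scalar_part_scalar_mult: "scalar_part (\<kappa> c * x) = c * scalar_part x"
  unfolding scalar_part_def by (rule coord_scalar) simp

lemma scalar_part_sum: "scalar_part (sum f A) = (\<Sum>a\<in>A. scalar_part (f a))"
  by (rule sum_additive) (rule scalar_part_add)

lemma scalar_part_uminus: "scalar_part (- x) = - scalar_part x"
  using scalar_part_scalar_mult[of "- 1" x] by (simp add: scalar_uminus scalar_one)

lemma scalar_part_monomial: "K \<subseteq> {..<n} \<Longrightarrow> scalar_part (mon K) = (if K = {} then 1 else 0)"
  unfolding scalar_part_def by (subst coord_monomial) auto

lemma scalar_part_scalar [simp]: "scalar_part (\<kappa> c) = c"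
  using scalar_part_scalar_mult[of c 1] scalar_part_monomial[of "{}"] by simp

lemma scalar_part_monomial_mult_gen:
  assumes I: "I \<subseteq> {..<n}" and j: "j < n"
  shows "scalar_part (mon I * g j) = scalar_part (g j * mon I)"
proof (cases "even (card (I - {j}))")
  case True
  then show ?thesis using monomial_mult_gen_commute[OF j I] by simp
next
  case False
  then have "I \<noteq> {j}" by auto
  then have "sym_diff I {j} \<noteq> {}" by auto
  moreover have "sym_diff I {j} \<subseteq> {..<n}" using I j by auto
  ultimately have "scalar_part (mon (sym_diff I {j})) = 0"
    by (metis scalar_part_monomial)
  then have "scalar_part (mon I * g j) = 0"
    unfolding monomial_mult_gen[OF j] scalar_part_scalar_mult by simp
  moreover have "g j * mon I = - (mon I * g j)"
    using monomial_mult_gen_commute[OF j I] False by simp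
  ultimately show ?thesis by (simp add: scalar_part_uminus)
qed

lemma scalar_part_mult_gen_commute:
  assumes j: "j < n"
  shows "scalar_part (x * g j) = scalar_part (g j * x)"
proof -
  have "scalar_part (x * g j) = (\<Sum>I\<in>Pow {..<n}. coord x I * scalar_part (mon I * g j))"
    by (rule semilinear_expansion)
       (simp_all add: distrib_right scalar_part_add mult.assoc scalar_part_scalar_mult)
  also have "\<dots> = (\<Sum>I\<in>Pow {..<n}. coord x I * scalar_part (g j * mon I))"
    using scalar_part_monomial_mult_gen[OF _ j] by simp
  also have "\<dots> = scalar_part (g j * x)"
    by (rule semilinear_expansion[symmetric])
       (simp_all add: distrib_left scalar_part_add scalar_commute_left scalar_part_scalar_mult)
  finally show ?thesis .
qed

lemma scalar_part_commute: "scalar_part (x * y) = scalar_part (y * x)"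
proof -
  have "scalar_part (z * mon I) = scalar_part (mon I * z)" for z I
  proof (induction arbitrary: z rule: monomial_induct)
    case (3 u v)
    then show ?case by (metis mult.assoc)
  qed (simp_all add: scalar_part_mult_gen_commute)
  moreover have "scalar_part (x * y) = (\<Sum>I\<in>Pow {..<n}. coord y I * scalar_part (x * mon I))"
    by (rule semilinear_expansion)
       (simp_all add: distrib_left scalar_part_add scalar_commute_left scalar_part_scalar_mult)
  moreover have "scalar_part (y * x) = (\<Sum>I\<in>Pow {..<n}. coord y I * scalar_part (mon I * x))"
    by (rule semilinear_expansion)
       (simp_all add: distrib_right scalar_part_add mult.assoc scalar_part_scalar_mult)
  ultimately show ?thesis by simp
qed

lemma scalar_part_gen_mult_gen:
  assumes "i < n" "j < n"
  shows "scalar_part (g i * g j) = (if i = j then complex_of_real (q j) else 0)"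
proof (cases "i = j")
  case True
  then show ?thesis using gen_square[OF assms(2)] by simp
next
  case False
  then have "sym_diff {i} {j} \<noteq> {}" "sym_diff {i} {j} \<subseteq> {..<n}" using assms by auto
  then have "scalar_part (mon (sym_diff {i} {j})) = 0" by (metis scalar_part_monomial)
  then show ?thesis
    using False monomial_mult_gen[OF assms(2), of "{i}"] monomial_singleton[OF assms(1)]
    by (simp add: scalar_part_scalar_mult)
qed

lemma scalar_part_gen_comb_mult_gen:
  assumes j: "j < n"
  shows "scalar_part ((\<Sum>i<n. \<kappa> (a i) * g i) * g j) = a j * complex_of_real (q j)"
proof -
  have "scalar_part ((\<Sum>i<n. \<kappa> (a i) * g i) * g j) = (\<Sum>i<n. a i * scalar_part (g i * g j))"
    by (simp add: sum_distrib_right scalar_part_sum mult.assoc scalar_part_scalar_mult)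
  also have "\<dots> = (\<Sum>i<n. if i = j then a j * complex_of_real (q j) else 0)"
    by (rule sum.cong) (simp_all add: scalar_part_gen_mult_gen j)
  finally show ?thesis using j by simp
qed

text \<open>Any normalised trace vanishes on a monomial \<open>g\<^sub>K \<noteq> 1\<close>, since some generator
  anticommutes with it: an element of \<open>K\<close> when \<open>|K|\<close> is even, an element outside \<open>K\<close>
  when \<open>|K|\<close> is odd (possible as \<open>n\<close> is even).\<close>
lemma anticommuting_gen_exists:
  assumes "K \<subseteq> {..<n}" "K \<noteq> {}"
  obtains j where "j < n" "mon K * g j = - (g j * mon K)"
proof -
  have "\<exists>j<n. odd (card (K - {j}))"
  proof (cases "even (card K)")
    case True
    from assms obtain j where j: "j \<in> K" "j < n" by auto
    moreover have "finite K" using assms(1) finite_subset by blast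
    ultimately have "card (K - {j}) = card K - 1" "card K > 0"
      by (auto simp: card_gt_0_iff)
    then show ?thesis using True j by (intro exI[of _ j]) auto
  next
    case odd: False
    have "card K \<le> card {..<n}" using assms(1) by (intro card_mono) auto
    moreover have "card K \<noteq> n" using odd even_rank by auto
    ultimately have "K \<noteq> {..<n}" by auto
    then obtain j where "j < n" "j \<notin> K" using assms(1) by auto
    then show ?thesis using odd by (intro exI[of _ j]) auto
  qed
  then show ?thesis using monomial_mult_gen_commute[OF _ assms(1)] that by fastforce
qed

lemma scalar_part_unique:
  fixes t :: "'a \<Rightarrow> complex"
  assumes add: "\<And>x y. t (x + y) = t x + t y"
    and scalar: "\<And>c x. t (\<kappa> c * x) = c * t x"
    and commute: "\<And>a b. t (a * b) = t (b * a)"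
    and one: "t 1 = 1"
  shows "t x = scalar_part x"
proof -
  have t_uminus: "t (- x) = - t x" for x
    using scalar[of "- 1" x] by (simp add: scalar_uminus scalar_one)
  have t_monomial: "t (mon K) = (if K = {} then 1 else 0)" if K: "K \<subseteq> {..<n}" for K
  proof (cases "K = {}")
    case False
    then obtain j where j: "j < n" "mon K * g j = - (g j * mon K)"
      using anticommuting_gen_exists[OF K] by blast
    have "complex_of_real (q j) * t (mon K) = t (mon K * (g j * g j))"
      using gen_square[OF j(1)] scalar_central scalar by metis
    also have "\<dots> = t (g j * (mon K * g j))" using commute[of "mon K * g j" "g j"] by (simp add: mult.assoc)
    also have "\<dots> = - (complex_of_real (q j) * t (mon K))"
      unfolding j(2) using gen_square[OF j(1)] by (simp add: t_uminus scalar mult.assoc[symmetric])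
    finally show ?thesis using gen_square_nonzero[OF j(1)] False by simp
  qed (simp add: one)
  have "t x = (\<Sum>I\<in>Pow {..<n}. coord x I * t (mon I))"
    by (rule semilinear_expansion) (simp_all add: add scalar)
  also have "\<dots> = (\<Sum>I\<in>Pow {..<n}. if I = {} then coord x I else 0)"
    by (rule sum.cong) (simp_all add: t_monomial)
  finally show ?thesis by (simp add: scalar_part_def)
qed

definition reversion :: "'a \<Rightarrow> 'a" where
  "reversion x = (\<Sum>I\<in>Pow {..<n}. \<kappa> (coord x I) * rmon I)"

lemma reversion_add: "reversion (x + y) = reversion x + reversion y"
proof -
  have "reversion (x + y) = (\<Sum>I\<in>Pow {..<n}. \<kappa> (coord x I + coord y I) * rmon I)"
    unfolding reversion_def by (rule sum.cong) (simp_all add: coord_add)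
  then show ?thesis unfolding reversion_def by (simp add: scalar_add distrib_right sum.distrib)
qed

lemma reversion_scalar_mult: "reversion (\<kappa> c * x) = \<kappa> c * reversion x"
proof -
  have "reversion (\<kappa> c * x) = (\<Sum>I\<in>Pow {..<n}. \<kappa> (c * coord x I) * rmon I)"
    unfolding reversion_def by (rule sum.cong) (simp_all add: coord_scalar)
  then show ?thesis unfolding reversion_def by (simp add: scalar_mult sum_distrib_left mult.assoc)
qed

lemma reversion_monomial:
  assumes K: "K \<subseteq> {..<n}"
  shows "reversion (mon K) = rmon K"
proof -
  have "reversion (mon K) = (\<Sum>I\<in>Pow {..<n}. if I = K then rmon I else 0)"
    unfolding reversion_def by (rule sum.cong) (auto simp: coord_monomial[OF K] scalar_one)
  also have "\<dots> = rmon K" using K by simp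
  finally show ?thesis .
qed

lemma reversion_one: "reversion 1 = 1"
  using reversion_monomial[of "{}"] by simp

lemma reversion_gen: "j < n \<Longrightarrow> reversion (g j) = g j"
  using reversion_monomial[of "{j}"] monomial_singleton rev_monomial_singleton by simp

lemma reversion_mult_gen:
  assumes j: "j < n"
  shows "reversion (x * g j) = g j * reversion x"
proof -
  have "reversion (mon I * g j) = g j * reversion (mon I)" if I: "I \<subseteq> {..<n}" for I
  proof -
    have "sym_diff I {j} \<subseteq> {..<n}" using I j by auto
    then have "reversion (mon I * g j) = \<kappa> (gen_mult_coeff I j) * rmon (sym_diff I {j})"
      unfolding monomial_mult_gen[OF j] reversion_scalar_mult by (simp add: reversion_monomial)
    then show ?thesis using gen_mult_rev_monomial[OF j] reversion_monomial[OF I] by simp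
  qed
  moreover have "reversion (x * g j) = (\<Sum>I\<in>Pow {..<n}. \<kappa> (coord x I) * reversion (mon I * g j))"
    by (rule semilinear_expansion)
       (simp_all add: distrib_right reversion_add mult.assoc reversion_scalar_mult)
  moreover have "g j * reversion x = (\<Sum>I\<in>Pow {..<n}. \<kappa> (coord x I) * (g j * reversion (mon I)))"
    by (rule semilinear_expansion)
       (simp_all add: distrib_left reversion_add scalar_commute_left reversion_scalar_mult)
  ultimately show ?thesis by simp
qed

lemma reversion_mult: "reversion (x * y) = reversion y * reversion x"
proof -
  have "reversion (z * mon I) = reversion (mon I) * reversion z" for z I
  proof (induction arbitrary: z rule: monomial_induct)
    case (3 u v)
    then show ?case by (metis mult.assoc)
  qed (simp_all add: reversion_one reversion_mult_gen reversion_gen)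
  moreover have "reversion (x * y) = (\<Sum>I\<in>Pow {..<n}. \<kappa> (coord y I) * reversion (x * mon I))"
    by (rule semilinear_expansion)
       (simp_all add: distrib_left reversion_add scalar_commute_left reversion_scalar_mult)
  moreover have "reversion y * reversion x
      = (\<Sum>I\<in>Pow {..<n}. \<kappa> (coord y I) * (reversion (mon I) * reversion x))"
    by (rule semilinear_expansion)
       (simp_all add: distrib_right reversion_add mult.assoc reversion_scalar_mult)
  ultimately show ?thesis by simp
qed

definition coeff_cnj :: "'a \<Rightarrow> 'a" where
  "coeff_cnj x = (\<Sum>I\<in>Pow {..<n}. \<kappa> (cnj (coord x I)) * mon I)"

lemma coeff_cnj_add: "coeff_cnj (x + y) = coeff_cnj x + coeff_cnj y"
proof -
  have "coeff_cnj (x + y) = (\<Sum>I\<in>Pow {..<n}. \<kappa> (cnj (coord x I) + cnj (coord y I)) * mon I)"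
    unfolding coeff_cnj_def by (rule sum.cong) (simp_all add: coord_add)
  then show ?thesis unfolding coeff_cnj_def by (simp add: scalar_add distrib_right sum.distrib)
qed

lemma coeff_cnj_scalar_mult: "coeff_cnj (\<kappa> c * x) = \<kappa> (cnj c) * coeff_cnj x"
proof -
  have "coeff_cnj (\<kappa> c * x) = (\<Sum>I\<in>Pow {..<n}. \<kappa> (cnj c * cnj (coord x I)) * mon I)"
    unfolding coeff_cnj_def by (rule sum.cong) (simp_all add: coord_scalar)
  then show ?thesis unfolding coeff_cnj_def by (simp add: scalar_mult sum_distrib_left mult.assoc)
qed

lemma coeff_cnj_monomial:
  assumes K: "K \<subseteq> {..<n}"
  shows "coeff_cnj (mon K) = mon K"
proof -
  have "coeff_cnj (mon K) = (\<Sum>I\<in>Pow {..<n}. if I = K then mon I else 0)"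
    unfolding coeff_cnj_def by (rule sum.cong) (auto simp: coord_monomial[OF K] scalar_one)
  also have "\<dots> = mon K" using K by simp
  finally show ?thesis .
qed

lemma coeff_cnj_one: "coeff_cnj 1 = 1"
  using coeff_cnj_monomial[of "{}"] by simp

lemma coeff_cnj_gen: "j < n \<Longrightarrow> coeff_cnj (g j) = g j"
  using coeff_cnj_monomial[of "{j}"] monomial_singleton by simp

lemma coeff_cnj_mult_gen:
  assumes j: "j < n"
  shows "coeff_cnj (x * g j) = coeff_cnj x * g j"
proof -
  have "coeff_cnj (mon I * g j) = coeff_cnj (mon I) * g j" if I: "I \<subseteq> {..<n}" for I
  proof -
    have "sym_diff I {j} \<subseteq> {..<n}" using I j by auto
    then have "coeff_cnj (mon I * g j) = \<kappa> (gen_mult_coeff I j) * mon (sym_diff I {j})"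
      unfolding monomial_mult_gen[OF j] coeff_cnj_scalar_mult by (simp add: coeff_cnj_monomial)
    then show ?thesis using monomial_mult_gen[OF j] coeff_cnj_monomial[OF I] by simp
  qed
  moreover have "coeff_cnj (x * g j) = (\<Sum>I\<in>Pow {..<n}. \<kappa> (cnj (coord x I)) * coeff_cnj (mon I * g j))"
    by (rule semilinear_expansion)
       (simp_all add: distrib_right coeff_cnj_add mult.assoc coeff_cnj_scalar_mult)
  moreover have "coeff_cnj x * g j = (\<Sum>I\<in>Pow {..<n}. \<kappa> (cnj (coord x I)) * (coeff_cnj (mon I) * g j))"
    by (rule semilinear_expansion)
       (simp_all add: distrib_right coeff_cnj_add mult.assoc coeff_cnj_scalar_mult)
  ultimately show ?thesis by simp
qed

lemma coeff_cnj_mult: "coeff_cnj (x * y) = coeff_cnj x * coeff_cnj y"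
proof -
  have "coeff_cnj (z * mon I) = coeff_cnj z * coeff_cnj (mon I)" for z I
  proof (induction arbitrary: z rule: monomial_induct)
    case (3 u v)
    then show ?case by (metis mult.assoc)
  qed (simp_all add: coeff_cnj_one coeff_cnj_mult_gen coeff_cnj_gen)
  moreover have "coeff_cnj (x * y) = (\<Sum>I\<in>Pow {..<n}. \<kappa> (cnj (coord y I)) * coeff_cnj (x * mon I))"
    by (rule semilinear_expansion)
       (simp_all add: distrib_left coeff_cnj_add scalar_commute_left coeff_cnj_scalar_mult)
  moreover have "coeff_cnj x * coeff_cnj y
      = (\<Sum>I\<in>Pow {..<n}. \<kappa> (cnj (coord y I)) * (coeff_cnj x * coeff_cnj (mon I)))"
    by (rule semilinear_expansion)
       (simp_all add: distrib_left coeff_cnj_add scalar_commute_left coeff_cnj_scalar_mult)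
  ultimately show ?thesis by simp
qed

lemma coeff_cnj_involutive: "coeff_cnj (coeff_cnj x) = x"
proof -
  have "coord (coeff_cnj x) I = cnj (coord x I)" if "I \<subseteq> {..<n}" for I
    by (rule coord_unique[OF _ that]) (simp add: coeff_cnj_def)
  then have "coeff_cnj (coeff_cnj x) = (\<Sum>I\<in>Pow {..<n}. \<kappa> (coord x I) * mon I)"
    unfolding coeff_cnj_def[of "coeff_cnj x"] by (intro sum.cong) simp_all
  then show ?thesis using coord_expansion[of x] by simp
qed

end

locale diagonal_antilinear_hom = clifford_basis +
  fixes \<sigma> :: "'a \<Rightarrow> 'a" and s :: "nat \<Rightarrow> real"
  assumes hom_add: "\<sigma> (x + y) = \<sigma> x + \<sigma> y"
    and hom_scalar_mult: "\<sigma> (\<kappa> c * x) = \<kappa> (cnj c) * \<sigma> x"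
    and hom_mult: "\<sigma> (x * y) = \<sigma> x * \<sigma> y"
    and hom_one: "\<sigma> 1 = 1"
    and hom_gen: "i < n \<Longrightarrow> \<sigma> (g i) = \<kappa> (complex_of_real (s i)) * g i"
begin

lemma hom_gen_factor:
  "i < n \<Longrightarrow> \<sigma> (gen_factor g I i) = \<kappa> (complex_of_real (if i \<in> I then s i else 1)) * gen_factor g I i"
  using hom_gen[of i] hom_one by (simp add: gen_factor_def scalar_one)

lemma hom_gen_factor_mult_gen_factor:
  assumes i: "i < n"
  shows "\<sigma> (gen_factor g I i) * gen_factor g I i = \<kappa> (complex_of_real (if i \<in> I then s i * q i else 1))"
proof (cases "i \<in> I")
  case True
  then have "\<sigma> (gen_factor g I i) * gen_factor g I i = \<kappa> (complex_of_real (s i)) * (g i * g i)"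
    using hom_gen[OF i] by (simp add: gen_factor_def mult.assoc)
  then show ?thesis using True gen_square[OF i] by (simp add: scalar_mult[symmetric])
qed (simp add: gen_factor_def hom_one scalar_one)

lemma hom_rev_monomial: "\<exists>c. \<sigma> (rmon I) = \<kappa> c * rmon I"
proof -
  have "\<exists>c. \<sigma> (prod_list (rev (map (gen_factor g I) L))) = \<kappa> c * prod_list (rev (map (gen_factor g I) L))"
    if "set L \<subseteq> {..<n}" for L
    using that
  proof (induction L)
    case Nil
    show ?case by (rule exI[of _ 1]) (simp add: hom_one scalar_one)
  next
    case (Cons a L)
    let ?R = "prod_list (rev (map (gen_factor g I) L))" and ?d = "complex_of_real (if a \<in> I then s a else 1)"
    obtain c where c: "\<sigma> ?R = \<kappa> c * ?R" using Cons by auto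
    have "\<sigma> (prod_list (rev (map (gen_factor g I) (a # L)))) = \<kappa> c * ?R * (\<kappa> ?d * gen_factor g I a)"
      using Cons.prems by (simp add: hom_mult c hom_gen_factor)
    also have "\<dots> = \<kappa> c * (\<kappa> ?d * (?R * gen_factor g I a))"
      by (simp only: mult.assoc scalar_commute_left[of ?R])
    also have "\<dots> = \<kappa> (c * ?d) * prod_list (rev (map (gen_factor g I) (a # L)))"
      by (simp add: scalar_mult mult.assoc)
    finally show ?case by blast
  qed
  moreover have "set [0..<n] \<subseteq> {..<n}" by auto
  ultimately show ?thesis unfolding rev_monomial_def by blast
qed

lemma hom_rev_monomial_mult_monomial:
  assumes I: "I \<subseteq> {..<n}"
  shows "\<sigma> (rmon I) * mon I = \<kappa> (complex_of_real (\<Prod>i\<in>I. s i * q i))"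
proof -
  define w where "w i = (if i \<in> I then s i * q i else 1)" for i
  have "\<sigma> (prod_list (rev (map (gen_factor g I) L))) * prod_list (map (gen_factor g I) L)
      = \<kappa> (complex_of_real (prod_list (map w L)))"
    if "set L \<subseteq> {..<n}" for L
    using that
  proof (induction L)
    case Nil
    then show ?case by (simp add: hom_one scalar_one)
  next
    case (Cons a L)
    let ?R = "prod_list (rev (map (gen_factor g I) L))" and ?P = "prod_list (map (gen_factor g I) L)"
    have "\<sigma> (prod_list (rev (map (gen_factor g I) (a # L)))) * prod_list (map (gen_factor g I) (a # L))
        = \<sigma> ?R * (\<sigma> (gen_factor g I a) * gen_factor g I a) * ?P"
      by (simp add: hom_mult mult.assoc)
    also have "\<dots> = \<kappa> (complex_of_real (w a)) * (\<sigma> ?R * ?P)"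
      using Cons.prems by (simp add: hom_gen_factor_mult_gen_factor w_def scalar_commute_left mult.assoc)
    also have "\<dots> = \<kappa> (complex_of_real (prod_list (map w (a # L))))"
      using Cons by (simp add: scalar_mult)
    finally show ?case .
  qed
  moreover have "set [0..<n] \<subseteq> {..<n}" by auto
  moreover have "prod_list (map w [0..<n]) = (\<Prod>i\<in>I. s i * q i)"
  proof -
    have "prod_list (map w [0..<n]) = (\<Prod>i\<in>{..<n}. w i)"
      by (simp add: prod.distinct_set_conv_list[symmetric] atLeast0LessThan)
    also have "\<dots> = (\<Prod>i\<in>{..<n} \<inter> I. s i * q i)"
      by (simp add: prod.inter_restrict w_def)
    finally show ?thesis using I by (simp add: Int_absorb1)
  qed
  ultimately show ?thesis unfolding monomial_def rev_monomial_def by simp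
qed

lemma scalar_part_hom_rev_monomial_mult_monomial:
  assumes I: "I \<subseteq> {..<n}" and J: "J \<subseteq> {..<n}"
  shows "scalar_part (\<sigma> (rmon I) * mon J) = (if I = J then complex_of_real (\<Prod>i\<in>I. s i * q i) else 0)"
proof (cases "I = J")
  case False
  obtain c where c: "\<sigma> (rmon I) = \<kappa> c * rmon I" using hom_rev_monomial by blast
  obtain c' where c': "rmon I * mon J = \<kappa> c' * mon (sym_diff I J)"
    using rev_monomial_mult[OF I J] by blast
  have "sym_diff I J \<noteq> {}" "sym_diff I J \<subseteq> {..<n}" using False I J by auto
  then have "scalar_part (mon (sym_diff I J)) = 0" by (metis scalar_part_monomial)
  then show ?thesis unfolding c mult.assoc c' using False by (simp add: scalar_part_scalar_mult)
qed (simp add: hom_rev_monomial_mult_monomial J)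

lemma scalar_part_hom_reversion_mult_self:
  "scalar_part (\<sigma> (reversion x) * x)
     = complex_of_real (\<Sum>J\<in>Pow {..<n}. (cmod (coord x J))\<^sup>2 * (\<Prod>i\<in>J. s i * q i))"
proof -
  have col: "scalar_part (\<sigma> (reversion x) * mon J) = cnj (coord x J) * complex_of_real (\<Prod>i\<in>J. s i * q i)"
    if J: "J \<subseteq> {..<n}" for J
  proof -
    have "\<sigma> (reversion x) = (\<Sum>I\<in>Pow {..<n}. \<kappa> (cnj (coord x I)) * \<sigma> (rmon I))"
      unfolding reversion_def by (simp add: sum_additive[OF hom_add] hom_scalar_mult)
    then have "scalar_part (\<sigma> (reversion x) * mon J)
        = (\<Sum>I\<in>Pow {..<n}. cnj (coord x I) * scalar_part (\<sigma> (rmon I) * mon J))"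
      by (simp add: sum_distrib_right scalar_part_sum mult.assoc scalar_part_scalar_mult)
    also have "\<dots> = (\<Sum>I\<in>Pow {..<n}. if I = J then cnj (coord x J) * complex_of_real (\<Prod>i\<in>J. s i * q i) else 0)"
      by (rule sum.cong) (simp_all add: scalar_part_hom_rev_monomial_mult_monomial J)
    finally show ?thesis using J by simp
  qed
  have "scalar_part (\<sigma> (reversion x) * x)
      = (\<Sum>J\<in>Pow {..<n}. coord x J * scalar_part (\<sigma> (reversion x) * mon J))"
    by (rule semilinear_expansion)
       (simp_all add: distrib_left scalar_part_add scalar_commute_left scalar_part_scalar_mult)
  also have "\<dots> = (\<Sum>J\<in>Pow {..<n}. complex_of_real ((cmod (coord x J))\<^sup>2 * (\<Prod>i\<in>J. s i * q i)))"
  proof (rule sum.cong)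
    fix J assume "J \<in> Pow {..<n}"
    moreover have "coord x J * cnj (coord x J) = complex_of_real ((cmod (coord x J))\<^sup>2)"
      by (rule complex_norm_square[symmetric])
    ultimately show "coord x J * scalar_part (\<sigma> (reversion x) * mon J)
        = complex_of_real ((cmod (coord x J))\<^sup>2 * (\<Prod>i\<in>J. s i * q i))"
      by (simp only: col Pow_iff mult.assoc[symmetric] of_real_mult)
  qed simp
  finally show ?thesis by simp
qed

lemma scalar_part_hom_reversion_mult_self_pos:
  assumes pos: "\<And>i. i < n \<Longrightarrow> s i * q i > 0" and x: "x \<noteq> 0"
  shows "cpos (scalar_part (\<sigma> (reversion x) * x))"
proof -
  obtain J0 where J0: "J0 \<subseteq> {..<n}" "coord x J0 \<noteq> 0" using coord_nonzero[OF x] by blast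
  have weight_pos: "(\<Prod>i\<in>J. s i * q i) > 0" if "J \<subseteq> {..<n}" for J
    using that pos by (intro prod_pos) auto
  have "(\<Sum>J\<in>Pow {..<n}. (cmod (coord x J))\<^sup>2 * (\<Prod>i\<in>J. s i * q i)) > 0"
    using J0 by (intro sum_pos2[of _ J0]) (auto simp: weight_pos less_imp_le)
  then show ?thesis unfolding scalar_part_hom_reversion_mult_self cpos_def by (simp del: of_real_sum)
qed

end

section \<open>Orthogonal bases of a symmetric bilinear form\<close>

lemma neg_eq_self_iff: "- x = x \<longleftrightarrow> (x::'a::real_vector) = 0"
proof
  assume "- x = x"
  then have "(2::real) *\<^sub>R x = 0" by (metis scaleR_2 add.right_inverse)
  then show "x = 0" by simp
qed simp

definition nondegenerate_on :: "('v::real_vector \<Rightarrow> 'v \<Rightarrow> real) \<Rightarrow> 'v set \<Rightarrow> bool" where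
  "nondegenerate_on b W \<longleftrightarrow> (\<forall>u\<in>W. (\<forall>w\<in>W. b u w = 0) \<longrightarrow> u = 0)"

definition orthogonal_basis_on :: "('v::real_vector \<Rightarrow> 'v \<Rightarrow> real) \<Rightarrow> 'v set \<Rightarrow> 'v set \<Rightarrow> bool" where
  "orthogonal_basis_on b W B \<longleftrightarrow> finite B \<and> B \<subseteq> W \<and>
     (\<forall>x\<in>B. \<forall>y\<in>B. x \<noteq> y \<longrightarrow> b x y = 0) \<and> (\<forall>x\<in>B. b x x \<noteq> 0) \<and>
     (\<forall>w\<in>W. w = (\<Sum>x\<in>B. (b w x / b x x) *\<^sub>R x))"

definition orthogonal_frame :: "('v::real_vector \<Rightarrow> 'v \<Rightarrow> real) \<Rightarrow> nat \<Rightarrow> (nat \<Rightarrow> 'v) \<Rightarrow> bool" where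
  "orthogonal_frame b n e \<longleftrightarrow>
     (\<forall>i<n. \<forall>j<n. i \<noteq> j \<longrightarrow> b (e i) (e j) = 0) \<and> (\<forall>i<n. b (e i) (e i) \<noteq> 0) \<and>
     (\<forall>v. v = (\<Sum>i<n. (b v (e i) / b (e i) (e i)) *\<^sub>R e i))"

locale sym_bilinear_fd =
  fixes b :: "'v::real_vector \<Rightarrow> 'v \<Rightarrow> real"
  assumes bilinear: "bilinear b"
    and symmetric: "b x y = b y x"
    and finite_dim: "\<exists>S::'v set. finite S \<and> span S = UNIV"
begin

lemmas ladd = bilinear_ladd[OF bilinear] and radd = bilinear_radd[OF bilinear]
  and lsub = bilinear_lsub[OF bilinear] and rsub = bilinear_rsub[OF bilinear]
  and lneg = bilinear_lneg[OF bilinear] and rneg = bilinear_rneg[OF bilinear]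

lemma lzero [simp]: "b 0 y = 0" and rzero [simp]: "b y 0 = 0"
  by (simp_all add: bilinear_lzero[OF bilinear] bilinear_rzero[OF bilinear])

lemma lscale: "b (c *\<^sub>R x) y = c * b x y"
  using bilinear_lmul[OF bilinear] by simp

lemma rscale: "b x (c *\<^sub>R y) = c * b x y"
  using bilinear_rmul[OF bilinear] by simp

lemma lsum: "b (sum f A) y = (\<Sum>a\<in>A. b (f a) y)"
  using bilinear linear_sum[of "\<lambda>x. b x y"] by (simp add: bilinear_def)

lemma independent_imp_finite: "independent (B::'v set) \<Longrightarrow> finite B"
  using finite_dim independent_span_bound by blast

lemma dim_less_if_proper_subspace:
  assumes A: "subspace (A::'v set)" and W: "A \<subseteq> W" and x: "x \<in> W" "x \<notin> A"
  shows "dim A < dim W"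
proof -
  obtain A0 where A0: "A0 \<subseteq> A" "independent A0" "A \<subseteq> span A0" "card A0 = dim A"
    by (rule basis_exists)
  obtain W0 where W0: "W0 \<subseteq> W" "independent W0" "W \<subseteq> span W0" "card W0 = dim W"
    by (rule basis_exists)
  have "x \<notin> span A0" using span_minimal[OF A0(1) A] x by auto
  then have "independent (insert x A0)" using A0(2) by (rule independent_insertI)
  moreover have "insert x A0 \<subseteq> span W0" using A0(1) W x W0(3) by auto
  ultimately have "card (insert x A0) \<le> card W0"
    using independent_span_bound[OF independent_imp_finite[OF W0(2)]] by blast
  moreover have "x \<notin> A0" using A0(1) x by auto
  ultimately show ?thesis using independent_imp_finite[OF A0(2)] A0(4) W0(4) by simp
qed

lemma nonisotropic_vector_exists:
  assumes W: "subspace W" and nd: "nondegenerate_on b W" and u: "u \<in> W" "u \<noteq> 0"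
  obtains x where "x \<in> W" "b x x \<noteq> 0"
proof -
  obtain w where w: "w \<in> W" "b u w \<noteq> 0" using nd u unfolding nondegenerate_on_def by auto
  have "b (u + w) (u + w) = b u u + 2 * b u w + b w w"
    using symmetric[of w u] by (simp add: ladd radd)
  then have "b u u \<noteq> 0 \<or> b w w \<noteq> 0 \<or> b (u + w) (u + w) \<noteq> 0" using w by auto
  moreover have "u + w \<in> W" using W u w by (simp add: subspace_add)
  ultimately show ?thesis using that u w by blast
qed

lemma orthogonal_complement_in:
  assumes W: "subspace W" and nd: "nondegenerate_on b W" and x: "x \<in> W" "b x x \<noteq> 0"
  defines "W' \<equiv> {y \<in> W. b x y = 0}"
  shows "subspace W'" and "nondegenerate_on b W'" and "dim W' < dim W"
    and "y \<in> W \<Longrightarrow> y - (b x y / b x x) *\<^sub>R x \<in> W'"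
proof -
  show sub: "subspace W'"
    unfolding subspace_def W'_def using W by (auto simp: subspace_0 subspace_add subspace_scale radd rscale)
  show proj: "y - (b x y / b x x) *\<^sub>R x \<in> W'" if "y \<in> W" for y
    unfolding W'_def using W that x by (simp add: subspace_diff subspace_scale rsub rscale)
  show "dim W' < dim W"
    using dim_less_if_proper_subspace[OF sub _ x(1)] x by (auto simp: W'_def)
  show "nondegenerate_on b W'"
    unfolding nondegenerate_on_def
  proof (intro ballI impI)
    fix v assume v: "v \<in> W'" and h: "\<forall>w\<in>W'. b v w = 0"
    have "b v y = 0" if "y \<in> W" for y
    proof -
      have "b v x = 0" using v symmetric[of v x] by (simp add: W'_def)
      moreover have "b v (y - (b x y / b x x) *\<^sub>R x) = 0" using h proj[OF that] by blast
      ultimately show ?thesis by (simp add: rsub rscale)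
    qed
    then show "v = 0" using nd v unfolding nondegenerate_on_def W'_def by blast
  qed
qed

lemma orthogonal_basis_on_insert:
  assumes B': "orthogonal_basis_on b {y \<in> W. b x y = 0} B'" and x: "x \<in> W" "b x x \<noteq> 0"
    and proj: "\<And>y. y \<in> W \<Longrightarrow> y - (b x y / b x x) *\<^sub>R x \<in> {y \<in> W. b x y = 0}"
  shows "orthogonal_basis_on b W (insert x B')"
proof -
  have fin: "finite B'" and B'W: "B' \<subseteq> W" and orth_x: "\<And>y. y \<in> B' \<Longrightarrow> b x y = 0"
    and orth: "\<forall>y\<in>B'. \<forall>z\<in>B'. y \<noteq> z \<longrightarrow> b y z = 0" and nz: "\<forall>y\<in>B'. b y y \<noteq> 0"
    and exp: "\<And>w. w \<in> W \<Longrightarrow> b x w = 0 \<Longrightarrow> w = (\<Sum>y\<in>B'. (b w y / b y y) *\<^sub>R y)"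
    using B' unfolding orthogonal_basis_on_def by auto
  have xB': "x \<notin> B'" using orth_x x(2) by blast
  have "v = (\<Sum>y\<in>insert x B'. (b v y / b y y) *\<^sub>R y)" if v: "v \<in> W" for v
  proof -
    let ?p = "v - (b x v / b x x) *\<^sub>R x"
    have "?p = (\<Sum>y\<in>B'. (b ?p y / b y y) *\<^sub>R y)"
      using exp proj[OF v] by blast
    also have "\<dots> = (\<Sum>y\<in>B'. (b v y / b y y) *\<^sub>R y)"
    proof (rule sum.cong)
      fix y assume "y \<in> B'"
      then have "b x y = 0" by (rule orth_x)
      then have "b ?p y = b v y" using symmetric[of x y] by (simp add: lsub lscale)
      then show "(b ?p y / b y y) *\<^sub>R y = (b v y / b y y) *\<^sub>R y" by simp
    qed simp
    finally have "v = (b x v / b x x) *\<^sub>R x + (\<Sum>y\<in>B'. (b v y / b y y) *\<^sub>R y)"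
      by (simp add: algebra_simps)
    then show ?thesis using fin xB' symmetric[of x v] by simp
  qed
  moreover have "b y z = 0" if "y \<in> insert x B'" "z \<in> insert x B'" "y \<noteq> z" for y z
    using that orth orth_x symmetric[of _ x] by auto
  ultimately show ?thesis
    using fin B'W x nz unfolding orthogonal_basis_on_def by auto
qed

lemma orthogonal_basis_on_exists:
  "subspace W \<Longrightarrow> nondegenerate_on b W \<Longrightarrow> \<exists>B. orthogonal_basis_on b W B"
proof (induction "dim W" arbitrary: W rule: less_induct)
  case less
  show ?case
  proof (cases "W \<subseteq> {0}")
    case True
    then show ?thesis by (intro exI[of _ "{}"]) (auto simp: orthogonal_basis_on_def)
  next
    case False
    then obtain x where x: "x \<in> W" "b x x \<noteq> 0"
      using nonisotropic_vector_exists[OF less.prems] by blast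
    note W' = orthogonal_complement_in[OF less.prems x]
    obtain B' where "orthogonal_basis_on b {y \<in> W. b x y = 0} B'"
      using less.hyps[OF W'(3) W'(1,2)] by blast
    then show ?thesis using orthogonal_basis_on_insert x W'(4) by blast
  qed
qed

lemma orthogonal_frame_if_basis:
  assumes B: "orthogonal_basis_on b UNIV B"
  obtains e where "orthogonal_frame b (dim (UNIV::'v set)) e" and "e ` {..<dim (UNIV::'v set)} = B"
proof -
  have fin: "finite B" and orth: "\<And>x y. x \<in> B \<Longrightarrow> y \<in> B \<Longrightarrow> x \<noteq> y \<Longrightarrow> b x y = 0"
    and nz: "\<And>x. x \<in> B \<Longrightarrow> b x x \<noteq> 0" and exp: "\<And>v. v = (\<Sum>x\<in>B. (b v x / b x x) *\<^sub>R x)"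
    using B unfolding orthogonal_basis_on_def by auto
  have "independent B"
  proof (rule independent_if_scalars_zero[OF fin])
    fix f x assume h: "(\<Sum>x\<in>B. f x *\<^sub>R x) = 0" and x: "x \<in> B"
    have "0 = b (\<Sum>y\<in>B. f y *\<^sub>R y) x" using h by simp
    also have "\<dots> = (\<Sum>y\<in>B. f y * b y x)" by (simp add: lsum lscale)
    also have "\<dots> = (\<Sum>y\<in>B. if y = x then f x * b x x else 0)"
      by (rule sum.cong) (auto simp: orth x)
    finally show "f x = 0" using fin x nz[OF x] by simp
  qed
  moreover have "span B = UNIV"
    using exp by (metis (no_types, lifting) UNIV_I span_base span_scale span_sum subsetI subset_antisym)
  ultimately have dim: "dim (UNIV::'v set) = card B" using dim_eq_card[of B UNIV] by simp
  obtain h where h: "bij_betw h {..<card B} B"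
    using ex_bij_betw_nat_finite[OF fin] by (auto simp: lessThan_atLeast0)
  then have hB: "h i \<in> B" and hinj: "h i = h j \<longleftrightarrow> i = j"
    if "i < card B" "j < card B" for i j
    using that by (auto simp: bij_betw_def inj_on_eq_iff)
  have "(\<Sum>i<card B. (b v (h i) / b (h i) (h i)) *\<^sub>R h i) = v" for v
    using sum.reindex_bij_betw[OF h, of "\<lambda>x. (b v x / b x x) *\<^sub>R x"] exp[of v] by simp
  then have "orthogonal_frame b (dim (UNIV::'v set)) h"
    unfolding orthogonal_frame_def dim using hB hinj orth nz by auto
  moreover have "h ` {..<dim (UNIV::'v set)} = B" using h dim by (simp add: bij_betw_def)
  ultimately show ?thesis by (rule that)
qed

lemma orthogonal_frame_exists:
  assumes "nondegenerate_on b UNIV"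
  shows "\<exists>e. orthogonal_frame b (dim (UNIV::'v set)) e"
  using orthogonal_basis_on_exists[OF subspace_UNIV assms] orthogonal_frame_if_basis by metis

end

locale isometric_involution = sym_bilinear_fd b for b :: "'v::real_vector \<Rightarrow> 'v \<Rightarrow> real" +
  fixes S :: "'v \<Rightarrow> 'v"
  assumes linear_S: "linear S" and involutive: "S (S x) = x" and isometric: "b (S x) (S y) = b x y"
    and b_nondegenerate: "nondegenerate_on b UNIV"
begin

lemma eigen_orthogonal: "S u = u \<Longrightarrow> S w = - w \<Longrightarrow> b u w = 0"
  using isometric[of u w] by (simp add: rneg)

definition even_part :: "'v \<Rightarrow> 'v" where "even_part v = (1/2) *\<^sub>R (v + S v)"
definition odd_part :: "'v \<Rightarrow> 'v" where "odd_part v = (1/2) *\<^sub>R (v - S v)"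

lemma S_even_part: "S (even_part v) = even_part v"
  unfolding even_part_def by (simp add: linear_add[OF linear_S] linear_scale[OF linear_S] involutive add.commute)

lemma S_odd_part: "S (odd_part v) = - odd_part v"
  unfolding odd_part_def
  by (simp add: linear_diff[OF linear_S] linear_scale[OF linear_S] involutive scaleR_diff_right)

lemma even_part_add_odd_part: "even_part v + odd_part v = v"
  unfolding even_part_def odd_part_def by (simp add: scaleR_add_right[symmetric] scaleR_2[symmetric])

lemma b_S_self: "b (S v) v = b (even_part v) (even_part v) - b (odd_part v) (odd_part v)"
proof -
  have "S v = even_part v - odd_part v"
    using linear_add[OF linear_S, of "even_part v" "odd_part v"]
    by (simp add: even_part_add_odd_part S_even_part S_odd_part)
  then have "b (S v) v = b (even_part v - odd_part v) (even_part v + odd_part v)"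
    by (simp add: even_part_add_odd_part)
  also have "\<dots> = b (even_part v) (even_part v) - b (odd_part v) (odd_part v)"
    using eigen_orthogonal[OF S_even_part S_odd_part, of v v] symmetric[of "odd_part v" "even_part v"]
    by (simp add: lsub radd)
  finally show ?thesis .
qed

lemma subspace_eigenspace: "subspace {v. S v = c *\<^sub>R v}"
  unfolding subspace_def
  by (simp add: linear_0[OF linear_S] linear_add[OF linear_S] linear_scale[OF linear_S] scaleR_add_right)

lemma b_even_part: "S x = x \<Longrightarrow> b (even_part v) x = b v x"
  using ladd[of "even_part v" "odd_part v" x] eigen_orthogonal[OF _ S_odd_part, of x v]
    symmetric[of x "odd_part v"] by (simp add: even_part_add_odd_part)

lemma b_odd_part: "S x = - x \<Longrightarrow> b (odd_part v) x = b v x"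
  using ladd[of "even_part v" "odd_part v" x] eigen_orthogonal[OF S_even_part, of x v]
  by (simp add: even_part_add_odd_part)

lemma nondegenerate_on_eigenspaces:
  "nondegenerate_on b {v. S v = v}" "nondegenerate_on b {v. S v = - v}"
proof -
  have zero: "u = 0" if "\<And>v. b (even_part v) u = 0" "\<And>v. b (odd_part v) u = 0" for u
  proof -
    have "b u v = 0" for v
      using that[of v] ladd[of "even_part v" "odd_part v" u] symmetric[of u v]
      by (simp add: even_part_add_odd_part)
    then show ?thesis using b_nondegenerate unfolding nondegenerate_on_def by auto
  qed
  show "nondegenerate_on b {v. S v = v}"
    unfolding nondegenerate_on_def
  proof (intro ballI impI)
    fix u assume u: "u \<in> {v. S v = v}" and h: "\<forall>w\<in>{v. S v = v}. b u w = 0"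
    have "b (even_part v) u = 0" for v using h S_even_part symmetric[of u] by auto
    moreover have "b (odd_part v) u = 0" for v
      using eigen_orthogonal[of u "odd_part v"] u S_odd_part symmetric[of u] by auto
    ultimately show "u = 0" by (rule zero)
  qed
  show "nondegenerate_on b {v. S v = - v}"
    unfolding nondegenerate_on_def
  proof (intro ballI impI)
    fix u assume u: "u \<in> {v. S v = - v}" and h: "\<forall>w\<in>{v. S v = - v}. b u w = 0"
    have "b (even_part v) u = 0" for v
      using eigen_orthogonal[of "even_part v" u] u S_even_part by auto
    moreover have "b (odd_part v) u = 0" for v using h S_odd_part symmetric[of u] by auto
    ultimately show "u = 0" by (rule zero)
  qed
qed

lemma adapted_orthogonal_basis_exists:
  "\<exists>B. orthogonal_basis_on b UNIV B \<and> (\<forall>x\<in>B. S x = x \<or> S x = - x)"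
proof -
  obtain Bp where Bp: "orthogonal_basis_on b {v. S v = v} Bp"
    using orthogonal_basis_on_exists[OF _ nondegenerate_on_eigenspaces(1)] subspace_eigenspace[of 1] by auto
  obtain Bm where Bm: "orthogonal_basis_on b {v. S v = - v} Bm"
    using orthogonal_basis_on_exists[OF _ nondegenerate_on_eigenspaces(2)] subspace_eigenspace[of "- 1"] by auto
  have fin: "finite Bp" "finite Bm" and Sp: "\<And>x. x \<in> Bp \<Longrightarrow> S x = x" and Sm: "\<And>x. x \<in> Bm \<Longrightarrow> S x = - x"
    and nz: "\<forall>x\<in>Bp \<union> Bm. b x x \<noteq> 0"
    and orth_p: "\<forall>x\<in>Bp. \<forall>y\<in>Bp. x \<noteq> y \<longrightarrow> b x y = 0" and orth_m: "\<forall>x\<in>Bm. \<forall>y\<in>Bm. x \<noteq> y \<longrightarrow> b x y = 0"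
    and exp_p: "\<And>w. S w = w \<Longrightarrow> w = (\<Sum>x\<in>Bp. (b w x / b x x) *\<^sub>R x)"
    and exp_m: "\<And>w. S w = - w \<Longrightarrow> w = (\<Sum>x\<in>Bm. (b w x / b x x) *\<^sub>R x)"
    using Bp Bm unfolding orthogonal_basis_on_def by auto
  have disj: "Bp \<inter> Bm = {}"
  proof (rule ccontr)
    assume "Bp \<inter> Bm \<noteq> {}"
    then obtain x where x: "x \<in> Bp" "x \<in> Bm" by auto
    then have "b x x = 0" by (rule eigen_orthogonal[OF Sp Sm])
    then show False using x nz by auto
  qed
  have orth: "\<forall>x\<in>Bp \<union> Bm. \<forall>y\<in>Bp \<union> Bm. x \<noteq> y \<longrightarrow> b x y = 0"
    using orth_p orth_m eigen_orthogonal Sp Sm symmetric by (metis Un_iff)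
  have "v = (\<Sum>x\<in>Bp \<union> Bm. (b v x / b x x) *\<^sub>R x)" for v
  proof -
    have "even_part v = (\<Sum>x\<in>Bp. (b v x / b x x) *\<^sub>R x)"
      using exp_p[OF S_even_part] b_even_part Sp by (simp cong: sum.cong)
    moreover have "odd_part v = (\<Sum>x\<in>Bm. (b v x / b x x) *\<^sub>R x)"
      using exp_m[OF S_odd_part] b_odd_part Sm by (simp cong: sum.cong)
    ultimately show ?thesis
      using even_part_add_odd_part[of v] fin disj by (simp add: sum.union_disjoint)
  qed
  then have "orthogonal_basis_on b UNIV (Bp \<union> Bm)"
    using fin nz orth unfolding orthogonal_basis_on_def by blast
  moreover have "\<forall>x\<in>Bp \<union> Bm. S x = x \<or> S x = - x" using Sp Sm by blast
  ultimately show ?thesis by blast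
qed

lemma adapted_orthogonal_frame_exists:
  "\<exists>e. orthogonal_frame b (dim (UNIV::'v set)) e \<and> (\<forall>i<dim (UNIV::'v set). S (e i) = e i \<or> S (e i) = - e i)"
proof -
  obtain B where B: "orthogonal_basis_on b UNIV B" "\<forall>x\<in>B. S x = x \<or> S x = - x"
    using adapted_orthogonal_basis_exists by blast
  obtain e where "orthogonal_frame b (dim (UNIV::'v set)) e" "e ` {..<dim (UNIV::'v set)} = B"
    using orthogonal_frame_if_basis[OF B(1)] by blast
  then show ?thesis using B(2) by auto
qed

end

section \<open>The complexified Clifford algebra\<close>

locale clifford_space = sym_bilinear_fd b for b :: "'v::real_vector \<Rightarrow> 'v \<Rightarrow> real" +
  fixes Q :: "'v \<Rightarrow> real" and sm :: "complex \<Rightarrow> 'a::ring_1 \<Rightarrow> 'a" and \<iota> :: "'v \<Rightarrow> 'a"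
  assumes Q_eq: "Q v = b v v"
    and clifford: "complex_clifford Q sm \<iota>"
    and form_nondegenerate: "nondegenerate_on b UNIV"
    and even_dim: "even (dim (UNIV :: 'v set))"
begin

definition scalar :: "complex \<Rightarrow> 'a" where "scalar c = sm c 1"

lemma sm_module: "module sm"
  using clifford by (simp add: complex_clifford_def complex_algebra_def)

sublocale sm: vector_space sm
  using sm_module by (simp add: module_iff_vector_space)

lemma sm_mult_left: "sm c (x * y) = sm c x * y" and sm_mult_right: "sm c (x * y) = x * sm c y"
  using clifford unfolding complex_clifford_def complex_algebra_def by blast+

lemma sm_eq_scalar_mult: "sm c x = scalar c * x"
  unfolding scalar_def using sm_mult_left[of c 1 x] by simp

lemma scalar_add: "scalar (x + y) = scalar x + scalar y"
  unfolding scalar_def by (rule sm.scale_left_distrib)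

lemma scalar_mult: "scalar (x * y) = scalar x * scalar y"
  unfolding scalar_def using sm_mult_left[of x 1 "sm y 1"] by simp

lemma scalar_one: "scalar 1 = 1" and scalar_zero: "scalar 0 = 0"
  unfolding scalar_def by simp_all

lemma scalar_central: "scalar c * z = z * scalar c"
  unfolding scalar_def using sm_mult_left[of c 1 z] sm_mult_right[of c z 1] by simp

lemma iota_add: "\<iota> (u + v) = \<iota> u + \<iota> v"
  and iota_scaleR: "\<iota> (r *\<^sub>R v) = scalar (complex_of_real r) * \<iota> v"
  and iota_square: "\<iota> v * \<iota> v = scalar (complex_of_real (b v v))"
  and iota_generates: "generates sm (range \<iota>)"
  and complex_dim_eq: "complex_dim sm = 2 ^ dim (UNIV :: 'v set)"
  using clifford unfolding complex_clifford_def Q_eq by (simp_all add: sm_eq_scalar_mult)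

lemma iota_zero: "\<iota> 0 = 0"
  using iota_add[of 0 0] by simp

lemma iota_uminus: "\<iota> (- v) = - \<iota> v"
proof -
  have "\<iota> v + \<iota> (- v) = 0" using iota_add[of v "- v"] iota_zero by simp
  then show ?thesis by (rule sym[OF add.inverse_unique])
qed

lemma iota_diff: "\<iota> (u - v) = \<iota> u - \<iota> v"
  using iota_add[of u "- v"] iota_uminus[of v] by simp

lemma iota_sum: "\<iota> (sum f A) = (\<Sum>a\<in>A. \<iota> (f a))"
  by (rule sum_additive) (rule iota_add)

lemma iota_anticommute: "\<iota> u * \<iota> w + \<iota> w * \<iota> u = scalar (complex_of_real (2 * b u w))"
proof -
  have "\<iota> (u + w) * \<iota> (u + w) = \<iota> u * \<iota> u + (\<iota> u * \<iota> w + \<iota> w * \<iota> u) + \<iota> w * \<iota> w"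
    by (simp add: iota_add algebra_simps)
  moreover have "b (u + w) (u + w) = b u u + 2 * b u w + b w w"
    using symmetric[of w u] by (simp add: ladd radd)
  ultimately have "scalar (complex_of_real (b u u)) + (\<iota> u * \<iota> w + \<iota> w * \<iota> u) + scalar (complex_of_real (b w w))
      = scalar (complex_of_real (b u u)) + scalar (complex_of_real (2 * b u w)) + scalar (complex_of_real (b w w))"
    by (simp only: iota_square of_real_add scalar_add)
  then show ?thesis by simp
qed

lemma generates_induct:
  assumes "1 \<in> A" "\<And>v. \<iota> v \<in> A" "\<And>x y. x \<in> A \<Longrightarrow> y \<in> A \<Longrightarrow> x + y \<in> A"
    "\<And>x y. x \<in> A \<Longrightarrow> y \<in> A \<Longrightarrow> x * y \<in> A" "\<And>c x. x \<in> A \<Longrightarrow> sm c x \<in> A"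
  shows "A = UNIV"
proof -
  have "1 \<in> A \<and> range \<iota> \<subseteq> A \<and> (\<forall>x\<in>A. \<forall>y\<in>A. x + y \<in> A \<and> x * y \<in> A) \<and> (\<forall>c. \<forall>x\<in>A. sm c x \<in> A)"
    using assms by auto
  then show ?thesis using iota_generates unfolding generates_def by (elim allE impE)
qed

lemma polar_eq: "polar Q u v = b u v"
  unfolding polar_def Q_eq using symmetric[of v u] by (simp add: ladd radd)

end

lemma (in vector_space) independent_if_spanning_card_le_dim:
  assumes fin: "finite B" and sp: "span B = UNIV" and card: "card B \<le> dim UNIV"
  shows "independent B"
proof
  assume "dependent B"
  then obtain a where a: "a \<in> B" "a \<in> span (B - {a})" unfolding dependent_def by blast
  then have "span (B - {a}) = UNIV" using span_redundant[OF a(2)] sp by (simp add: insert_absorb)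
  then have "dim UNIV \<le> card (B - {a})" using dim_le_card[of UNIV "B - {a}"] fin by simp
  then show False using card fin a(1) card_Diff1_less[of B a] by simp
qed

text \<open>A \<open>B\<close>-orthogonal basis \<open>e\<close> of \<open>V\<close> makes the monomials in the \<open>\<iota> (e i)\<close> a basis of
  \<open>\<complex>l(V)\<close>: they span, and there are \<open>2^n\<close> of them.  In this basis the trace, transpose and
  conjugation, which Defs specifies only by their properties, become explicit.\<close>
locale clifford_presentation = clifford_space b Q sm \<iota>
  for b :: "'v::real_vector \<Rightarrow> 'v \<Rightarrow> real" and Q sm and \<iota> :: "'v \<Rightarrow> 'a::ring_1" +
  fixes n :: nat and e :: "nat \<Rightarrow> 'v"
  assumes n_eq: "n = dim (UNIV :: 'v set)" and frame: "orthogonal_frame b n e"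
begin

definition gen :: "nat \<Rightarrow> 'a" where "gen i = \<iota> (e i)"
definition gen_weight :: "nat \<Rightarrow> real" where "gen_weight i = b (e i) (e i)"

lemma frame_orthogonal: "i < n \<Longrightarrow> j < n \<Longrightarrow> i \<noteq> j \<Longrightarrow> b (e i) (e j) = 0"
  and gen_weight_nonzero: "i < n \<Longrightarrow> gen_weight i \<noteq> 0"
  and frame_expansion: "v = (\<Sum>i<n. (b v (e i) / gen_weight i) *\<^sub>R e i)"
  using frame unfolding orthogonal_frame_def gen_weight_def by auto

sublocale clifford_frame scalar n gen gen_weight
proof
  show "scalar (x + y) = scalar x + scalar y" for x y by (rule scalar_add)
  show "scalar (x * y) = scalar x * scalar y" for x y by (rule scalar_mult)
  show "scalar 1 = 1" by (rule scalar_one)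
  show "scalar c * z = z * scalar c" for c z by (rule scalar_central)
  show "gen i * gen i = scalar (complex_of_real (gen_weight i))" for i
    unfolding gen_def gen_weight_def by (rule iota_square)
  show "gen i * gen j = - (gen j * gen i)" if "i < n" "j < n" "i \<noteq> j" for i j
    using iota_anticommute[of "e i" "e j"] frame_orthogonal[OF that]
    by (simp add: gen_def scalar_zero eq_neg_iff_add_eq_0)
qed

lemma iota_expansion: "\<iota> v = (\<Sum>i<n. scalar (complex_of_real (b v (e i) / gen_weight i)) * gen i)"
  by (subst frame_expansion[of v]) (simp add: iota_sum iota_scaleR gen_def del: of_real_divide)

definition monomial_span :: "'a set" where
  "monomial_span = {x. \<exists>c. x = (\<Sum>I\<in>Pow {..<n}. scalar (c I) * monomial gen n I)}"

lemma monomial_spanI: "x = (\<Sum>I\<in>Pow {..<n}. scalar (c I) * monomial gen n I) \<Longrightarrow> x \<in> monomial_span"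
  unfolding monomial_span_def by blast

lemma monomial_span_add: "x \<in> monomial_span \<Longrightarrow> y \<in> monomial_span \<Longrightarrow> x + y \<in> monomial_span"
proof -
  assume "x \<in> monomial_span" "y \<in> monomial_span"
  then obtain c d where "x = (\<Sum>I\<in>Pow {..<n}. scalar (c I) * monomial gen n I)"
    and "y = (\<Sum>I\<in>Pow {..<n}. scalar (d I) * monomial gen n I)"
    unfolding monomial_span_def by blast
  then have "x + y = (\<Sum>I\<in>Pow {..<n}. scalar (c I + d I) * monomial gen n I)"
    by (simp add: sum.distrib scalar_add distrib_right)
  then show ?thesis by (rule monomial_spanI)
qed

lemma monomial_span_scalar_mult: "x \<in> monomial_span \<Longrightarrow> scalar a * x \<in> monomial_span"
proof -
  assume "x \<in> monomial_span"
  then obtain c where "x = (\<Sum>I\<in>Pow {..<n}. scalar (c I) * monomial gen n I)"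
    unfolding monomial_span_def by blast
  then have "scalar a * x = (\<Sum>I\<in>Pow {..<n}. scalar (a * c I) * monomial gen n I)"
    by (simp add: sum_distrib_left scalar_mult mult.assoc)
  then show ?thesis by (rule monomial_spanI)
qed

lemma monomial_span_sum: "(\<And>a. a \<in> A \<Longrightarrow> f a \<in> monomial_span) \<Longrightarrow> sum f A \<in> monomial_span"
proof (induction A rule: infinite_finite_induct)
  case (infinite A)
  then show ?case using monomial_spanI[of 0 "\<lambda>_. 0"] by (simp add: scalar_zero)
next
  case empty
  then show ?case using monomial_spanI[of 0 "\<lambda>_. 0"] by (simp add: scalar_zero)
qed (simp add: monomial_span_add)

lemma monomial_in_span: "J \<subseteq> {..<n} \<Longrightarrow> monomial gen n J \<in> monomial_span"
proof (rule monomial_spanI[where c="\<lambda>I. if I = J then 1 else 0"])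
  assume J: "J \<subseteq> {..<n}"
  have "(\<Sum>I\<in>Pow {..<n}. scalar (if I = J then 1 else 0) * monomial gen n I)
      = (\<Sum>I\<in>Pow {..<n}. if I = J then monomial gen n I else 0)"
    by (rule sum.cong) (simp_all add: scalar_one scalar_zero)
  then show "monomial gen n J = (\<Sum>I\<in>Pow {..<n}. scalar (if I = J then 1 else 0) * monomial gen n I)"
    using J by simp
qed

lemma monomial_span_mult: "x \<in> monomial_span \<Longrightarrow> y \<in> monomial_span \<Longrightarrow> x * y \<in> monomial_span"
proof -
  assume "x \<in> monomial_span" "y \<in> monomial_span"
  then obtain c d where c: "x = (\<Sum>I\<in>Pow {..<n}. scalar (c I) * monomial gen n I)"
    and d: "y = (\<Sum>I\<in>Pow {..<n}. scalar (d I) * monomial gen n I)"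
    unfolding monomial_span_def by blast
  have "scalar a * mI * (scalar a' * mJ) = scalar (a * a') * (mI * mJ)" for a a' mI mJ
  proof -
    have "mI * (scalar a' * mJ) = scalar a' * (mI * mJ)"
      by (simp only: mult.assoc[symmetric] scalar_central[of a' mI])
    then show ?thesis by (simp only: mult.assoc scalar_mult)
  qed
  then have "x * y = (\<Sum>J\<in>Pow {..<n}. \<Sum>I\<in>Pow {..<n}.
      scalar (c I * d J) * (monomial gen n I * monomial gen n J))"
    unfolding c d by (simp only: sum_distrib_right sum_distrib_left)
  also have "\<dots> \<in> monomial_span"
  proof (intro monomial_span_sum monomial_span_scalar_mult)
    fix I J assume IJ: "J \<in> Pow {..<n}" "I \<in> Pow {..<n}"
    then obtain c' where "monomial gen n I * monomial gen n J = scalar c' * monomial gen n (sym_diff I J)"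
      using monomial_mult[of J I] by auto
    moreover have "sym_diff I J \<subseteq> {..<n}" using IJ by auto
    ultimately show "monomial gen n I * monomial gen n J \<in> monomial_span"
      using monomial_span_scalar_mult monomial_in_span by simp
  qed
  finally show ?thesis .
qed

lemma monomial_span_UNIV: "monomial_span = UNIV"
proof (rule generates_induct)
  show "1 \<in> monomial_span" using monomial_in_span[of "{}"] by simp
  show "\<iota> v \<in> monomial_span" for v
    unfolding iota_expansion[of v]
    by (intro monomial_span_sum monomial_span_scalar_mult) (simp add: monomial_in_span monomial_singleton[symmetric])
  show "sm c x \<in> monomial_span" if "x \<in> monomial_span" for c x
    using that monomial_span_scalar_mult by (simp add: sm_eq_scalar_mult)
qed (simp_all add: monomial_span_add monomial_span_mult)

lemma monomials_independent:
  assumes zero: "(\<Sum>I\<in>Pow {..<n}. scalar (c I) * monomial gen n I) = 0" and I0: "I0 \<subseteq> {..<n}"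
  shows "c I0 = 0"
proof -
  let ?M = "monomial gen n ` Pow {..<n}"
  have span: "sm.span ?M = UNIV"
  proof -
    have "x \<in> sm.span ?M" for x
    proof -
      obtain d where "x = (\<Sum>I\<in>Pow {..<n}. scalar (d I) * monomial gen n I)"
        using monomial_span_UNIV unfolding monomial_span_def by blast
      also have "\<dots> = (\<Sum>I\<in>Pow {..<n}. sm (d I) (monomial gen n I))" by (simp add: sm_eq_scalar_mult)
      also have "\<dots> \<in> sm.span ?M" by (intro sm.span_sum sm.span_scale sm.span_base) auto
      finally show ?thesis .
    qed
    then show ?thesis by auto
  qed
  have dim: "sm.dim (UNIV :: 'a set) = card (Pow {..<n})"
    using complex_dim_eq n_eq by (simp add: complex_dim_def card_Pow)
  have "card ?M \<le> card (Pow {..<n})" by (rule card_image_le) simp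
  moreover have "sm.dim (UNIV :: 'a set) \<le> card ?M" using sm.dim_le_card[of UNIV ?M] span by simp
  ultimately have card: "card ?M = card (Pow {..<n})" using dim by simp
  then have inj: "inj_on (monomial gen n) (Pow {..<n})" by (intro eq_card_imp_inj_on) simp_all
  have "sm.independent ?M"
    using sm.independent_if_spanning_card_le_dim[OF _ span] card dim by simp
  moreover have "(\<Sum>m\<in>?M. sm (c (the_inv_into (Pow {..<n}) (monomial gen n) m)) m) = 0"
    using zero inj by (simp add: sum.reindex the_inv_into_f_f sm_eq_scalar_mult)
  ultimately have "c (the_inv_into (Pow {..<n}) (monomial gen n) (monomial gen n I0)) = 0"
    using I0 by (intro sm.independentD[where t="?M"]) auto
  then show ?thesis using inj I0 by (simp add: the_inv_into_f_f)
qed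

sublocale clifford_basis scalar n gen gen_weight
proof
  show "\<exists>c. x = (\<Sum>I\<in>Pow {..<n}. scalar (c I) * monomial gen n I)" for x
    using monomial_span_UNIV unfolding monomial_span_def by blast
  show "c I = 0" if "(\<Sum>I\<in>Pow {..<n}. scalar (c I) * monomial gen n I) = 0" "I \<subseteq> {..<n}" for c I
    using monomials_independent[OF that] .
  show "gen_weight i \<noteq> 0" if "i < n" for i using gen_weight_nonzero[OF that] .
  show "even n" using even_dim n_eq by simp
qed

lemma VC_eq_zero:
  assumes zero: "\<iota> u + sm \<i> (\<iota> w) = 0"
  shows "u = 0 \<and> w = 0"
proof -
  define a where "a i = complex_of_real (b u (e i) / gen_weight i) + \<i> * complex_of_real (b w (e i) / gen_weight i)" for i
  have comb: "\<iota> u + sm \<i> (\<iota> w) = (\<Sum>i<n. scalar (a i) * gen i)"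
    unfolding iota_expansion[of u] iota_expansion[of w] a_def
    by (simp add: sm_eq_scalar_mult sum_distrib_left sum.distrib scalar_add scalar_mult distrib_right
        mult.assoc del: of_real_divide)
  have "a j = 0" if j: "j < n" for j
  proof -
    have "a j * complex_of_real (gen_weight j) = 0"
      using scalar_part_gen_comb_mult_gen[OF j, of a] zero scalar_part_scalar[of 0] comb
      by (simp add: scalar_zero)
    then show ?thesis using gen_weight_nonzero[OF j] by simp
  qed
  then have "b u (e j) / gen_weight j = 0 \<and> b w (e j) / gen_weight j = 0" if "j < n" for j
    using that by (simp add: a_def complex_eq_iff)
  then have "(\<Sum>i<n. (b u (e i) / gen_weight i) *\<^sub>R e i) = 0" "(\<Sum>i<n. (b w (e i) / gen_weight i) *\<^sub>R e i) = 0"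
    by (simp_all add: sum.neutral)
  then show ?thesis using trans[OF frame_expansion[of u]] trans[OF frame_expansion[of w]] by blast
qed

lemma coeff_cnj_iota: "coeff_cnj (\<iota> v) = \<iota> v"
  unfolding iota_expansion[of v]
  by (simp add: sum_additive[OF coeff_cnj_add] coeff_cnj_scalar_mult coeff_cnj_gen)

lemma reversion_iota: "reversion (\<iota> v) = \<iota> v"
  unfolding iota_expansion[of v]
  by (simp add: sum_additive[OF reversion_add] reversion_scalar_mult reversion_gen)

lemma cconj_eq_coeff_cnj: "cconj sm \<iota> = coeff_cnj"
  unfolding cconj_def
proof (rule the_equality)
  have "bij coeff_cnj" by (rule involuntory_imp_bij) (rule coeff_cnj_involutive)
  moreover have "coeff_cnj (sm c x) = sm (cnj c) (coeff_cnj x)" for c x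
    by (simp add: sm_eq_scalar_mult coeff_cnj_scalar_mult)
  ultimately show "antilinear_automorphism sm coeff_cnj \<and> (\<forall>v. coeff_cnj (\<iota> v) = \<iota> v)"
    unfolding antilinear_automorphism_def using coeff_cnj_add coeff_cnj_mult coeff_cnj_one coeff_cnj_iota
    by blast
next
  fix c assume c: "antilinear_automorphism sm c \<and> (\<forall>v. c (\<iota> v) = \<iota> v)"
  have "{x. c x = coeff_cnj x} = UNIV"
  proof (rule generates_induct)
    show "sm a x \<in> {x. c x = coeff_cnj x}" if "x \<in> {x. c x = coeff_cnj x}" for a x
    proof -
      have "c (sm a x) = sm (cnj a) (coeff_cnj x)"
        using c that unfolding antilinear_automorphism_def by simp
      moreover have "coeff_cnj (sm a x) = sm (cnj a) (coeff_cnj x)"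
        by (simp add: sm_eq_scalar_mult coeff_cnj_scalar_mult)
      ultimately show ?thesis by simp
    qed
  qed (use c in \<open>simp_all add: antilinear_automorphism_def coeff_cnj_add coeff_cnj_mult coeff_cnj_one coeff_cnj_iota\<close>)
  then show "c = coeff_cnj" by auto
qed

lemma transp_eq_reversion: "transp sm \<iota> = reversion"
  unfolding transp_def
proof (rule the_equality)
  have "reversion (sm c x) = sm c (reversion x)" for c x
    by (simp add: sm_eq_scalar_mult reversion_scalar_mult)
  then show "(\<forall>x y. reversion (x + y) = reversion x + reversion y) \<and>
      (\<forall>c x. reversion (sm c x) = sm c (reversion x)) \<and>
      (\<forall>x y. reversion (x * y) = reversion y * reversion x) \<and> reversion 1 = 1 \<and>
      (\<forall>v. reversion (\<iota> v) = \<iota> v)"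
    using reversion_add reversion_mult reversion_one reversion_iota by blast
next
  fix T assume T: "(\<forall>x y. T (x + y) = T x + T y) \<and> (\<forall>c x. T (sm c x) = sm c (T x)) \<and>
      (\<forall>x y. T (x * y) = T y * T x) \<and> T 1 = 1 \<and> (\<forall>v. T (\<iota> v) = \<iota> v)"
  have "{x. T x = reversion x} = UNIV"
  proof (rule generates_induct)
    show "sm a x \<in> {x. T x = reversion x}" if "x \<in> {x. T x = reversion x}" for a x
    proof -
      have "T (sm a x) = sm a (reversion x)" using T that by simp
      moreover have "reversion (sm a x) = sm a (reversion x)"
        by (simp add: sm_eq_scalar_mult reversion_scalar_mult)
      ultimately show ?thesis by simp
    qed
  qed (use T in \<open>simp_all add: reversion_add reversion_mult reversion_one reversion_iota\<close>)
  then show "T = reversion" by auto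
qed

lemma ntrace_eq_scalar_part: "ntrace sm = scalar_part"
  unfolding ntrace_def
proof (rule the_equality)
  have "scalar_part (sm c x) = c * scalar_part x" for c x
    by (simp add: sm_eq_scalar_mult scalar_part_scalar_mult)
  moreover have "scalar_part 1 = 1" using scalar_part_scalar[of 1] by (simp add: scalar_one)
  ultimately show "(\<forall>x y. scalar_part (x + y) = scalar_part x + scalar_part y) \<and>
      (\<forall>c x. scalar_part (sm c x) = c * scalar_part x) \<and>
      (\<forall>a b. scalar_part (a * b) = scalar_part (b * a)) \<and> scalar_part 1 = 1"
    using scalar_part_add scalar_part_commute by blast
next
  fix t assume t: "(\<forall>x y. t (x + y) = t x + t y) \<and> (\<forall>c x. t (sm c x) = c * t x) \<and>
      (\<forall>a b. t (a * b) = t (b * a)) \<and> t 1 = 1"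
  have "t x = scalar_part x" for x
  proof (rule scalar_part_unique)
    show "t (scalar c * x) = c * t x" for c x using t by (simp add: sm_eq_scalar_mult[symmetric])
  qed (use t in blast)+
  then show "t = scalar_part" by auto
qed

end

context clifford_space
begin

lemma presentation_exists: "\<exists>e. clifford_presentation b Q sm \<iota> (dim (UNIV :: 'v set)) e"
  using orthogonal_frame_exists[OF form_nondegenerate]
  by (auto simp: clifford_presentation_def clifford_presentation_axioms_def clifford_space_axioms)

lemma scalar_inj: "scalar c = scalar d \<longleftrightarrow> c = d"
proof -
  obtain e where "clifford_presentation b Q sm \<iota> (dim (UNIV :: 'v set)) e"
    using presentation_exists by blast
  then interpret P: clifford_presentation b Q sm \<iota> "dim (UNIV :: 'v set)" e .
  show ?thesis by (rule P.scalar_inj)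
qed

lemma VC_eq_zero: "\<iota> u + sm \<i> (\<iota> w) = 0 \<Longrightarrow> u = 0 \<and> w = 0"
proof -
  obtain e where "clifford_presentation b Q sm \<iota> (dim (UNIV :: 'v set)) e"
    using presentation_exists by blast
  then show "\<iota> u + sm \<i> (\<iota> w) = 0 \<Longrightarrow> u = 0 \<and> w = 0" by (rule clifford_presentation.VC_eq_zero)
qed

lemma VC_eq_iff: "\<iota> u1 + sm \<i> (\<iota> w1) = \<iota> u2 + sm \<i> (\<iota> w2) \<longleftrightarrow> u1 = u2 \<and> w1 = w2"
proof
  assume eq: "\<iota> u1 + sm \<i> (\<iota> w1) = \<iota> u2 + sm \<i> (\<iota> w2)"
  have "\<iota> (u1 - u2) + sm \<i> (\<iota> (w1 - w2)) = (\<iota> u1 + sm \<i> (\<iota> w1)) - (\<iota> u2 + sm \<i> (\<iota> w2))"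
    by (simp add: iota_diff sm_eq_scalar_mult right_diff_distrib)
  then have "\<iota> (u1 - u2) + sm \<i> (\<iota> (w1 - w2)) = 0" using eq by simp
  then show "u1 = u2 \<and> w1 = w2" using VC_eq_zero by fastforce
qed simp

lemma iota_VC: "\<iota> v = \<iota> v + sm \<i> (\<iota> 0)"
  by (simp add: iota_zero sm_eq_scalar_mult)

lemma iota_inj: "\<iota> u = \<iota> v \<longleftrightarrow> u = v"
  using VC_eq_iff[of u 0 v 0] by (simp add: iota_zero sm_eq_scalar_mult)

lemma Bc_VC: "Bc Q sm \<iota> (\<iota> u1 + sm \<i> (\<iota> w1)) (\<iota> u2 + sm \<i> (\<iota> w2))
    = Complex (b u1 u2 - b w1 w2) (b u1 w2 + b w1 u2)"
  unfolding Bc_def by (rule the_equality) (auto simp: VC_eq_iff polar_eq)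

lemma cconj_VC: "cconj sm \<iota> (\<iota> u + sm \<i> (\<iota> w)) = \<iota> u + sm \<i> (\<iota> (- w))"
proof -
  obtain e where "clifford_presentation b Q sm \<iota> (dim (UNIV :: 'v set)) e"
    using presentation_exists by blast
  then interpret P: clifford_presentation b Q sm \<iota> "dim (UNIV :: 'v set)" e .
  show ?thesis
    by (simp add: P.cconj_eq_coeff_cnj P.coeff_cnj_add sm_eq_scalar_mult P.coeff_cnj_scalar_mult
        P.coeff_cnj_iota iota_uminus P.scalar_uminus)
qed

lemma transp_VC: "transp sm \<iota> (\<iota> u + sm \<i> (\<iota> w)) = \<iota> u + sm \<i> (\<iota> w)"
proof -
  obtain e where "clifford_presentation b Q sm \<iota> (dim (UNIV :: 'v set)) e"
    using presentation_exists by blast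
  then interpret P: clifford_presentation b Q sm \<iota> "dim (UNIV :: 'v set)" e .
  show ?thesis
    by (simp add: P.transp_eq_reversion P.reversion_add sm_eq_scalar_mult P.reversion_scalar_mult
        P.reversion_iota)
qed

lemma ntrace_scalar: "ntrace sm (scalar c) = c"
proof -
  obtain e where "clifford_presentation b Q sm \<iota> (dim (UNIV :: 'v set)) e"
    using presentation_exists by blast
  then interpret P: clifford_presentation b Q sm \<iota> "dim (UNIV :: 'v set)" e .
  show ?thesis by (simp add: P.ntrace_eq_scalar_part)
qed

lemma VC_square:
  assumes "b u w = 0"
  shows "(\<iota> u + sm \<i> (\<iota> w)) * (\<iota> u + sm \<i> (\<iota> w)) = scalar (Complex (b u u - b w w) 0)"
proof -
  define K A B where "K = scalar \<i>" and "A = \<iota> u" and "B = \<iota> w"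
  have KB: "X * (K * B) = K * (X * B)" for X
    unfolding K_def by (metis mult.assoc scalar_central)
  have anti: "\<iota> u * \<iota> w + \<iota> w * \<iota> u = 0"
    using iota_anticommute[of u w] assms by (simp add: scalar_zero)
  have "(A + K * B) * (A + K * B) = A * A + (K * (B * A) + (K * (A * B) + K * (K * (B * B))))"
    by (simp only: distrib_left distrib_right add.assoc mult.assoc KB)
  also have "\<dots> = A * A + K * (A * B + B * A) + K * K * (B * B)"
    by (simp only: distrib_left add.assoc add.left_commute mult.assoc)
  also have "\<dots> = scalar (complex_of_real (b u u) + \<i> * \<i> * complex_of_real (b w w))"
    unfolding K_def A_def B_def iota_square anti by (simp only: mult_zero_right add_0_right scalar_mult scalar_add)
  also have "complex_of_real (b u u) + \<i> * \<i> * complex_of_real (b w w) = Complex (b u u - b w w) 0"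
    by (simp add: complex_eq_iff)
  finally show ?thesis unfolding K_def A_def B_def sm_eq_scalar_mult[of \<i> "\<iota> w"] .
qed

end

section \<open>Admissible real structures\<close>

locale admissible_clifford = clifford_space b Q sm \<iota>
  for b :: "'v::real_vector \<Rightarrow> 'v \<Rightarrow> real" and Q sm and \<iota> :: "'v \<Rightarrow> 'a::ring_1" +
  fixes \<sigma> :: "'a \<Rightarrow> 'a"
  assumes admissible: "admissible sm \<iota> \<sigma>"
begin

lemma sigma_add: "\<sigma> (x + y) = \<sigma> x + \<sigma> y"
  and sigma_sm: "\<sigma> (sm c x) = sm (cnj c) (\<sigma> x)"
  and sigma_mult: "\<sigma> (x * y) = \<sigma> x * \<sigma> y"
  and sigma_one: "\<sigma> 1 = 1"
  and sigma_involutive: "\<sigma> (\<sigma> x) = x"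
  and sigma_VC: "\<sigma> ` VC sm \<iota> \<subseteq> VC sm \<iota>"
  using admissible unfolding admissible_def real_structure_def antilinear_automorphism_def by auto

lemma sigma_cconj: "\<sigma> (cconj sm \<iota> x) = cconj sm \<iota> (\<sigma> x)"
  using admissible unfolding admissible_def by (metis comp_apply)

text \<open>\<open>\<sigma>\<close> maps \<open>V\<close> into itself: \<open>V\<close> is the part of \<open>V\<^sup>\<complex>\<close> fixed by \<open>c\<close>, and \<open>\<sigma>\<close> commutes
  with \<open>c\<close>.\<close>
lemma sigma_iota_in_range: "\<exists>u. \<sigma> (\<iota> v) = \<iota> u"
proof -
  have "\<sigma> (\<iota> v) \<in> VC sm \<iota>" using sigma_VC iota_VC[of v] unfolding VC_def by blast
  then obtain u w where uw: "\<sigma> (\<iota> v) = \<iota> u + sm \<i> (\<iota> w)" unfolding VC_def by blast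
  have "cconj sm \<iota> (\<iota> v) = \<iota> v" using cconj_VC[of v 0] by (simp add: iota_zero sm_eq_scalar_mult)
  then have "\<iota> u + sm \<i> (\<iota> (- w)) = \<iota> u + sm \<i> (\<iota> w)"
    using sigma_cconj[of "\<iota> v"] cconj_VC[of u w] uw by simp
  then have "w = 0" unfolding VC_eq_iff by (simp add: neg_eq_self_iff)
  then show ?thesis using uw by (auto simp: iota_zero sm_eq_scalar_mult)
qed

definition sigmaV :: "'v \<Rightarrow> 'v" where
  "sigmaV v = (SOME u. \<sigma> (\<iota> v) = \<iota> u)"

lemma sigma_iota: "\<sigma> (\<iota> v) = \<iota> (sigmaV v)"
  unfolding sigmaV_def using someI_ex[OF sigma_iota_in_range] .

lemma sigmaV_add: "sigmaV (x + y) = sigmaV x + sigmaV y"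
  by (simp flip: iota_inj add: iota_add sigma_add sigma_iota[symmetric])

lemma sigmaV_scaleR: "sigmaV (c *\<^sub>R x) = c *\<^sub>R sigmaV x"
proof -
  have "\<iota> (sigmaV (c *\<^sub>R x)) = \<iota> (c *\<^sub>R sigmaV x)"
    using sigma_sm[of "complex_of_real c" "\<iota> x"]
    by (simp add: sigma_iota[symmetric] iota_scaleR sm_eq_scalar_mult)
  then show ?thesis by (simp add: iota_inj)
qed

lemma sigmaV_involutive: "sigmaV (sigmaV x) = x"
  using sigma_involutive[of "\<iota> x"] by (simp add: sigma_iota iota_inj)

lemma sigmaV_isometric: "b (sigmaV x) (sigmaV y) = b x y"
proof -
  have sigma_scalar: "\<sigma> (scalar c) = scalar (cnj c)" for c
    unfolding scalar_def by (simp add: sigma_sm sigma_one)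
  have square: "b (sigmaV x) (sigmaV x) = b x x" for x
    using sigma_mult[of "\<iota> x" "\<iota> x"] by (simp add: iota_square sigma_iota sigma_scalar scalar_inj)
  have "b (sigmaV (x + y)) (sigmaV (x + y)) = b (x + y) (x + y)" by (rule square)
  then show ?thesis
    using square[of x] square[of y] symmetric[of "sigmaV y" "sigmaV x"] symmetric[of y x]
    by (simp add: sigmaV_add ladd radd)
qed

sublocale isometric_involution b sigmaV
  by unfold_locales (simp_all add: sigmaV_add sigmaV_scaleR sigmaV_involutive sigmaV_isometric form_nondegenerate)

lemma sigma_VC_eq: "\<sigma> (\<iota> u + sm \<i> (\<iota> w)) = \<iota> (sigmaV u) + sm \<i> (\<iota> (- sigmaV w))"
proof -
  have "sm (- \<i>) y = sm \<i> (- y)" for y by (simp add: sm.scale_minus_left sm.scale_minus_right)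
  then show ?thesis by (simp add: sigma_add sigma_sm sigma_iota iota_uminus)
qed

lemma Vsigma_iff:
  "x \<in> Vsigma sm \<iota> \<sigma> \<longleftrightarrow> (\<exists>u w. x = \<iota> u + sm \<i> (\<iota> w) \<and> sigmaV u = u \<and> sigmaV w = - w)"
proof
  assume "x \<in> Vsigma sm \<iota> \<sigma>"
  then obtain u w where x: "x = \<iota> u + sm \<i> (\<iota> w)" "\<sigma> x = x"
    unfolding Vsigma_def VC_def by blast
  then have "sigmaV u = u \<and> - sigmaV w = w" using sigma_VC_eq[of u w] by (simp add: VC_eq_iff)
  then show "\<exists>u w. x = \<iota> u + sm \<i> (\<iota> w) \<and> sigmaV u = u \<and> sigmaV w = - w"
    using x by (metis minus_minus)
next
  assume "\<exists>u w. x = \<iota> u + sm \<i> (\<iota> w) \<and> sigmaV u = u \<and> sigmaV w = - w"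
  then obtain u w where "x = \<iota> u + sm \<i> (\<iota> w)" "sigmaV u = u" "sigmaV w = - w" by blast
  then show "x \<in> Vsigma sm \<iota> \<sigma>" using sigma_VC_eq[of u w] unfolding Vsigma_def VC_def by auto
qed

lemma iota_in_Vsigma_iff: "\<iota> v \<in> Vsigma sm \<iota> \<sigma> \<longleftrightarrow> sigmaV v = v"
proof -
  have "(\<exists>u w. \<iota> v + sm \<i> (\<iota> 0) = \<iota> u + sm \<i> (\<iota> w) \<and> sigmaV u = u \<and> sigmaV w = - w) \<longleftrightarrow> sigmaV v = v"
    unfolding VC_eq_iff using linear_0[OF linear_S] by auto
  then show ?thesis unfolding Vsigma_iff iota_VC[of v, symmetric] .
qed

lemma iota_in_i_Vsigma_iff: "\<iota> v \<in> sm \<i> ` Vsigma sm \<iota> \<sigma> \<longleftrightarrow> sigmaV v = - v"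
proof -
  have i_VC: "sm \<i> (\<iota> u + sm \<i> (\<iota> w)) = \<iota> (- w) + sm \<i> (\<iota> u)" for u w
    by (simp add: sm.scale_right_distrib sm.scale_scale iota_uminus sm.scale_minus_left add.commute)
  have "\<iota> v \<in> sm \<i> ` Vsigma sm \<iota> \<sigma> \<longleftrightarrow>
      (\<exists>u w. \<iota> v = sm \<i> (\<iota> u + sm \<i> (\<iota> w)) \<and> sigmaV u = u \<and> sigmaV w = - w)"
    by (auto simp: image_iff Vsigma_iff; blast)
  also have "\<dots> \<longleftrightarrow>
      (\<exists>u w. \<iota> v + sm \<i> (\<iota> 0) = \<iota> (- w) + sm \<i> (\<iota> u) \<and> sigmaV u = u \<and> sigmaV w = - w)"
    by (simp only: i_VC iota_VC[of v, symmetric])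
  also have "\<dots> \<longleftrightarrow> sigmaV v = - v"
    unfolding VC_eq_iff using linear_0[OF linear_S] linear_neg[OF linear_S]
    by (auto simp: minus_equation_iff intro!: exI[of _ "- v"])
  finally show ?thesis .
qed

lemma Qsigma_eq: "Qsigma Q sm \<iota> \<sigma> v = Complex (b (sigmaV v) v) 0"
  unfolding Qsigma_def sigma_iota using Bc_VC[of "sigmaV v" 0 v 0] by (simp flip: iota_VC)

lemma Bc_Vsigma:
  assumes "sigmaV u = u" "sigmaV w = - w"
  shows "Bc Q sm \<iota> (\<iota> u + sm \<i> (\<iota> w)) (\<iota> u + sm \<i> (\<iota> w)) = Complex (b u u - b w w) 0"
  using Bc_VC[of u w u w] eigen_orthogonal[OF assms] symmetric[of w u] by simp

lemma sigma_product_Vsigma: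
  assumes "x \<in> Vsigma sm \<iota> \<sigma>"
  shows "sigma_product sm \<iota> \<sigma> x x = Bc Q sm \<iota> x x"
proof -
  obtain u w where x: "x = \<iota> u + sm \<i> (\<iota> w)" and uw: "sigmaV u = u" "sigmaV w = - w"
    using assms unfolding Vsigma_iff by blast
  have "\<sigma> x = x" using assms unfolding Vsigma_def by simp
  then have "sigma_product sm \<iota> \<sigma> x x = ntrace sm (x * x)"
    unfolding sigma_product_def x transp_VC by simp
  also have "\<dots> = Complex (b u u - b w w) 0"
    unfolding x VC_square[OF eigen_orthogonal[OF uw]] by (rule ntrace_scalar)
  finally show ?thesis unfolding x Bc_Vsigma[OF uw] .
qed

lemma sigma_product_pos:
  assumes pos: "\<And>v. sigmaV v = v \<Longrightarrow> v \<noteq> 0 \<Longrightarrow> Q v > 0"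
    and neg: "\<And>v. sigmaV v = - v \<Longrightarrow> v \<noteq> 0 \<Longrightarrow> Q v < 0"
    and a: "a \<noteq> 0"
  shows "cpos (sigma_product sm \<iota> \<sigma> a a)"
proof -
  obtain e where frame: "orthogonal_frame b (dim (UNIV :: 'v set)) e"
    and eigen: "\<And>i. i < dim (UNIV :: 'v set) \<Longrightarrow> sigmaV (e i) = e i \<or> sigmaV (e i) = - e i"
    using adapted_orthogonal_frame_exists by blast
  interpret P: clifford_presentation b Q sm \<iota> "dim (UNIV :: 'v set)" e
    using frame by unfold_locales simp_all
  define s where "s i = (if sigmaV (e i) = e i then 1 else (- 1 :: real))" for i
  interpret D: diagonal_antilinear_hom scalar "dim (UNIV :: 'v set)" P.gen P.gen_weight \<sigma> s
  proof unfold_locales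
    show "\<sigma> (scalar c * x) = scalar (cnj c) * \<sigma> x" for c x
      using sigma_sm[of c x] by (simp add: sm_eq_scalar_mult)
    show "\<sigma> (P.gen i) = scalar (complex_of_real (s i)) * P.gen i" if "i < dim (UNIV :: 'v set)" for i
      using eigen[OF that] by (auto simp: P.gen_def sigma_iota s_def scalar_one P.scalar_uminus iota_uminus)
  qed (simp_all add: sigma_add sigma_mult sigma_one)
  have "s i * P.gen_weight i > 0" if i: "i < dim (UNIV :: 'v set)" for i
  proof -
    have "e i \<noteq> 0" using P.gen_weight_nonzero[OF i] by (auto simp: P.gen_weight_def)
    then show ?thesis
      using eigen[OF i] pos[of "e i"] neg[of "e i"] by (auto simp: s_def P.gen_weight_def Q_eq)
  qed
  then show ?thesis
    using D.scalar_part_hom_reversion_mult_self_pos[OF _ a]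
    by (simp add: sigma_product_def P.transp_eq_reversion P.ntrace_eq_scalar_part)
qed

lemma signature_iff_Qsigma_pos:
  "(\<forall>v. sigmaV v = v \<longrightarrow> v \<noteq> 0 \<longrightarrow> Q v > 0) \<and> (\<forall>v. sigmaV v = - v \<longrightarrow> v \<noteq> 0 \<longrightarrow> Q v < 0)
    \<longleftrightarrow> (\<forall>v. v \<noteq> 0 \<longrightarrow> cpos (Qsigma Q sm \<iota> \<sigma> v))"
proof -
  have "(\<forall>v. sigmaV v = v \<longrightarrow> v \<noteq> 0 \<longrightarrow> b v v > 0) \<and> (\<forall>v. sigmaV v = - v \<longrightarrow> v \<noteq> 0 \<longrightarrow> b v v < 0)
      \<longleftrightarrow> (\<forall>v. v \<noteq> 0 \<longrightarrow> b (sigmaV v) v > 0)" (is "?sig \<longleftrightarrow> ?pos")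
  proof
    assume sig: ?sig
    show ?pos
    proof (intro allI impI)
      fix v :: 'v assume "v \<noteq> 0"
      let ?p = "even_part v" and ?m = "odd_part v"
      have "?p \<noteq> 0 \<or> ?m \<noteq> 0" using even_part_add_odd_part[of v] \<open>v \<noteq> 0\<close> by auto
      moreover have "?p \<noteq> 0 \<Longrightarrow> b ?p ?p > 0" "?m \<noteq> 0 \<Longrightarrow> b ?m ?m < 0"
        using sig S_even_part S_odd_part by blast+
      ultimately show "b (sigmaV v) v > 0"
        unfolding b_S_self by (cases "?p = 0"; cases "?m = 0") auto
    qed
  next
    assume ?pos
    then show ?sig by (auto simp: lneg)
  qed
  then show ?thesis by (simp add: Q_eq Qsigma_eq cpos_def complex_is_Real_iff)
qed

lemma Qsigma_pos_iff_Bc_pos: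
  "(\<forall>v. v \<noteq> 0 \<longrightarrow> cpos (Qsigma Q sm \<iota> \<sigma> v)) \<longleftrightarrow> (\<forall>x\<in>Vsigma sm \<iota> \<sigma>. x \<noteq> 0 \<longrightarrow> cpos (Bc Q sm \<iota> x x))"
proof
  assume Qpos: "\<forall>v. v \<noteq> 0 \<longrightarrow> cpos (Qsigma Q sm \<iota> \<sigma> v)"
  show "\<forall>x\<in>Vsigma sm \<iota> \<sigma>. x \<noteq> 0 \<longrightarrow> cpos (Bc Q sm \<iota> x x)"
  proof (intro ballI impI)
    fix x assume "x \<in> Vsigma sm \<iota> \<sigma>" "x \<noteq> 0"
    then obtain u w where x: "x = \<iota> u + sm \<i> (\<iota> w)" and uw: "sigmaV u = u" "sigmaV w = - w"
      unfolding Vsigma_iff by blast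
    have "u + w \<noteq> 0"
    proof
      assume "u + w = 0"
      then have "w = - u" by (simp add: eq_neg_iff_add_eq_0 add.commute)
      then have "u = 0" using uw linear_neg[OF linear_S, of u] by (simp add: neg_eq_self_iff)
      then show False using \<open>x \<noteq> 0\<close> \<open>w = - u\<close> x by (simp add: iota_zero sm_eq_scalar_mult)
    qed
    moreover have "b (sigmaV (u + w)) (u + w) = b u u - b w w"
      using linear_add[OF linear_S, of u w] uw eigen_orthogonal[OF uw] symmetric[of w u]
      by (simp add: lsub radd)
    ultimately show "cpos (Bc Q sm \<iota> x x)"
      using Qpos unfolding x Bc_Vsigma[OF uw] Qsigma_eq by auto
  qed
next
  assume Bpos: "\<forall>x\<in>Vsigma sm \<iota> \<sigma>. x \<noteq> 0 \<longrightarrow> cpos (Bc Q sm \<iota> x x)"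
  show "\<forall>v. v \<noteq> 0 \<longrightarrow> cpos (Qsigma Q sm \<iota> \<sigma> v)"
  proof (intro allI impI)
    fix v :: 'v assume "v \<noteq> 0"
    let ?x = "\<iota> (even_part v) + sm \<i> (\<iota> (odd_part v))"
    have "?x \<in> Vsigma sm \<iota> \<sigma>" unfolding Vsigma_iff using S_even_part S_odd_part by blast
    moreover have "?x \<noteq> 0" using VC_eq_zero \<open>v \<noteq> 0\<close> even_part_add_odd_part[of v] by fastforce
    ultimately have "cpos (Bc Q sm \<iota> ?x ?x)" using Bpos by blast
    then show "cpos (Qsigma Q sm \<iota> \<sigma> v)"
      unfolding Bc_Vsigma[OF S_even_part S_odd_part] Qsigma_eq b_S_self .
  qed
qed

lemma Bc_pos_iff_sigma_product_pos:
  "(\<forall>x\<in>Vsigma sm \<iota> \<sigma>. x \<noteq> 0 \<longrightarrow> cpos (Bc Q sm \<iota> x x))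
    \<longleftrightarrow> (\<forall>a. a \<noteq> 0 \<longrightarrow> cpos (sigma_product sm \<iota> \<sigma> a a))"
proof
  assume "\<forall>x\<in>Vsigma sm \<iota> \<sigma>. x \<noteq> 0 \<longrightarrow> cpos (Bc Q sm \<iota> x x)"
  then have "(\<forall>v. sigmaV v = v \<longrightarrow> v \<noteq> 0 \<longrightarrow> Q v > 0) \<and> (\<forall>v. sigmaV v = - v \<longrightarrow> v \<noteq> 0 \<longrightarrow> Q v < 0)"
    unfolding signature_iff_Qsigma_pos Qsigma_pos_iff_Bc_pos .
  then show "\<forall>a. a \<noteq> 0 \<longrightarrow> cpos (sigma_product sm \<iota> \<sigma> a a)"
    by (intro allI impI sigma_product_pos) auto
next
  assume pos: "\<forall>a. a \<noteq> 0 \<longrightarrow> cpos (sigma_product sm \<iota> \<sigma> a a)"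
  show "\<forall>x\<in>Vsigma sm \<iota> \<sigma>. x \<noteq> 0 \<longrightarrow> cpos (Bc Q sm \<iota> x x)"
  proof (intro ballI impI)
    fix x assume "x \<in> Vsigma sm \<iota> \<sigma>" "x \<noteq> 0"
    then show "cpos (Bc Q sm \<iota> x x)" using pos sigma_product_Vsigma by metis
  qed
qed

end

theorem proposition6:
  fixes Q :: "'v::real_vector \<Rightarrow> real"
    and sm :: "complex \<Rightarrow> 'a::ring_1 \<Rightarrow> 'a"
    and \<iota> :: "'v \<Rightarrow> 'a"
    and \<sigma> :: "'a \<Rightarrow> 'a"
  assumes fin: "finite_dim_space TYPE('v)"
    and even: "even (dim (UNIV :: 'v set))"
    and qf: "quadratic_form Q"
    and nondeg: "nondegenerate Q"
    and cl: "complex_clifford Q sm \<iota>"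
    and adm: "admissible sm \<iota> \<sigma>"
  defines "Vplus \<equiv> {v. \<iota> v \<in> Vsigma sm \<iota> \<sigma>}"
    and "Vminus \<equiv> {v. \<iota> v \<in> sm \<i> ` Vsigma sm \<iota> \<sigma>}"
  shows
    "(((\<forall>v\<in>Vplus. v \<noteq> 0 \<longrightarrow> Q v > 0) \<and> (\<forall>v\<in>Vminus. v \<noteq> 0 \<longrightarrow> Q v < 0))
       \<longleftrightarrow> (\<forall>v. v \<noteq> 0 \<longrightarrow> cpos (Qsigma Q sm \<iota> \<sigma> v))) \<and>
    ((\<forall>v. v \<noteq> 0 \<longrightarrow> cpos (Qsigma Q sm \<iota> \<sigma> v))
       \<longleftrightarrow> (\<forall>x\<in>Vsigma sm \<iota> \<sigma>. x \<noteq> 0 \<longrightarrow> cpos (Bc Q sm \<iota> x x))) \<and>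
    ((\<forall>x\<in>Vsigma sm \<iota> \<sigma>. x \<noteq> 0 \<longrightarrow> cpos (Bc Q sm \<iota> x x))
       \<longleftrightarrow> (\<forall>a. a \<noteq> 0 \<longrightarrow> cpos (sigma_product sm \<iota> \<sigma> a a)))"
proof -
  obtain b where bil: "bilinear b" and sym: "\<And>u v. b u v = b v u" and Q_eq: "\<And>v. Q v = b v v"
    using qf unfolding quadratic_form_def by blast
  have "polar Q u v = b u v" for u v
    unfolding polar_def Q_eq using sym[of v u] by (simp add: bilinear_ladd[OF bil] bilinear_radd[OF bil])
  then have "nondegenerate_on b UNIV"
    using nondeg unfolding nondegenerate_def nondegenerate_on_def by simp
  then interpret admissible_clifford b Q sm \<iota> \<sigma>
    using fin even cl adm bil sym Q_eq
    by unfold_locales (simp_all add: finite_dim_space_def)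
  have "Vplus = {v. sigmaV v = v}" "Vminus = {v. sigmaV v = - v}"
    unfolding Vplus_def Vminus_def by (simp_all add: iota_in_Vsigma_iff iota_in_i_Vsigma_iff)
  then show ?thesis
    using signature_iff_Qsigma_pos Qsigma_pos_iff_Bc_pos Bc_pos_iff_sigma_product_pos by simp
qed

end
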